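(* Fix $\delta>-1$ and $n\ge 1$. (a) Let $\boldsymbol{\mathcal D}^A(n)=(D^A_1(n),\dots,D^A_n(n))$ be the degree sequence of $G(n)$ in Model A, and let $$\widetilde{\boldsymbol{\mathcal D}}^A(n):=\bigl(BI_1(T^A_n),\,BI_2(T^A_n-T^A_2),\,\dots,\,BI_{n-1}(T^A_n-T^A_{n-1}),\,BI_n(0)\bigr).$$ Then $\boldsymbol{\mathcal D}^A(n)$ and $\widetilde{\boldsymbol{\mathcal D}}^A(n)$ have the same distribution on $\mathbb R^n$. (b) Let $\boldsymbol{\mathcal D}^B(n)=(D^B_1(n),\dots,D^B_n(n))$ be the degree sequence of $G(n)$ in Model B, and let $$\widetilde{\boldsymbol{\mathcal D}}^B(n):=\bigl(BI_1(T^B_n),\,BI_2(T^B_n),\,BI_3(T^B_n-T^B_2),\,\dots,\,BI_{n}(T^B_n-T^B_{n-1})\bigr),$$ i.e. the $i$-th coordinate is $BI_i(T^B_n-T^B_{i-1})$. Then $\boldsymbol{\mathcal D}^B(n)$ and $\widetilde{\boldsymbol{\mathcal D}}^B(n)$ have the same distribution on $\mathbb R^n$.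
   Context: Let $\delta>-1$. Degrees: a self loop contributes 2 to the degree of its node. Model A: $G(1)$ consists of a single node $v_1$ with a self loop (so $v_1$ has degree 2). For $n\ge1$, given $G(n)$ (nodes $v_1,\dots,v_n$, $n$ edges), $G(n+1)$ is obtained by adding a new node $v_{n+1}$ and one edge joining $v_{n+1}$ to an existing node $v_i$, $1\le i\le n$, chosen with probability $\frac{D_i(n)+\delta}{(2+\delta)n}$, where $D_i(n)$ is the degree of $v_i$ in $G(n)$. Model B: $G(1)$ is as in Model A. For $n\ge1$, given $G(n)$, $G(n+1)$ is obtained either by adding a new node $v_{n+1}$ and an edge joining it to $v_i$, with probability $\frac{D_i(n)+\delta}{(2+\delta)n+1+\delta}$ for each $1\le i\le n$, or by adding a new node $v_{n+1}$ with a self loop, with probability $\frac{1+\delta}{(2+\delta)n+1+\delta}$. B.I. processes: let $\{BI_i(t):t\ge0\}_{i\ge1}$ be independent continuous-time Markov pure-jump processes on the integers with transition rate $q_{j,j+1}=j+\delta$ (only upward jumps by 1), with $BI_1(0)=2$ and $BI_i(0)=1$ for $i\ge2$. Let $\tau^{(i)}_k$ be the $k$-th jump time of $BI_i$ ($\tau^{(i)}_0=0$). Branching times for Model A: $T^A_1=0$ and for $n\ge1$, $T^A_{n+1}:=\min\{T^A_i+\tau^{(i)}_k: k\ge1,\ 1\le i\le n,\ T^A_i+\tau^{(i)}_k>T^A_n\}$ (the $i$-th process is run as $BI_i(t-T^A_i)$, $t\ge T^A_i$; in particular $T^A_2=\tau^{(1)}_1$). Branching times for Model B: $T^B_0=T^B_1=0$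 and for $n\ge1$, $T^B_{n+1}:=\min\{T^B_{i-1}+\tau^{(i)}_k: k\ge1,\ 1\le i\le n+1,\ T^B_{i-1}+\tau^{(i)}_k>T^B_n\}$ (the $i$-th process is run as $BI_i(t-T^B_{i-1})$, $t\ge T^B_{i-1}$). *)

theory Defs
  imports "HOL-Probability.Probability"
begin

section \<open>Graphs as edge lists (nodes are 1,2,...,n)\<close>

type_synonym graph = "(nat \<times> nat) list"

definition deg :: "graph \<Rightarrow> nat \<Rightarrow> nat" where
  "deg G v = length (filter (\<lambda>e. fst e = v) G) + length (filter (\<lambda>e. snd e = v) G)"

definition degseq :: "nat \<Rightarrow> graph \<Rightarrow> nat list" where
  "degseq n G = map (deg G) [1..<n+1]"

text \<open>Model A: G(1) is one node with a self loop; G(n+1) attaches node n+1 to v_i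
  with probability (D_i(n)+delta)/((2+delta) n).  (graphA 0 is a dummy = G(1).)\<close>
fun graphA :: "real \<Rightarrow> nat \<Rightarrow> graph pmf" where
  "graphA \<delta> 0 = return_pmf [(1,1)]"
| "graphA \<delta> (Suc 0) = return_pmf [(1,1)]"
| "graphA \<delta> (Suc (Suc m)) =
     (let n = Suc m in
      do { G \<leftarrow> graphA \<delta> n;
           i \<leftarrow> pmf_of_list (map (\<lambda>i. (i, (real (deg G i) + \<delta>) / ((2 + \<delta>) * real n))) [1..<n+1]);
           return_pmf (G @ [(n+1, i)]) })"

fun graphB :: "real \<Rightarrow> nat \<Rightarrow> graph pmf" where
  "graphB \<delta> 0 = return_pmf [(1,1)]"
| "graphB \<delta> (Suc 0) = return_pmf [(1,1)]"
| "graphB \<delta> (Suc (Suc m)) =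
     (let n = Suc m in
      do { G \<leftarrow> graphB \<delta> n;
           i \<leftarrow> pmf_of_list
                 (map (\<lambda>i. (i, (real (deg G i) + \<delta>) / ((2 + \<delta>) * real n + 1 + \<delta>))) [1..<n+1]
                  @ [(n+1, (1 + \<delta>) / ((2 + \<delta>) * real n + 1 + \<delta>))]);
           return_pmf (G @ [(n+1, i)]) })"

definition BI0 :: "nat \<Rightarrow> nat" where
  "BI0 i = (if i = 1 then 2 else 1)"

text \<open>Rate of the (k+1)-th holding time of process i (state BI0 i + k): q = j + delta.\<close>
definition BIrate :: "real \<Rightarrow> nat \<Rightarrow> nat \<Rightarrow> real" where
  "BIrate \<delta> i k = real (BI0 i + k) + \<delta>"

definition jump :: "(nat \<Rightarrow> nat \<Rightarrow> real) \<Rightarrow> nat \<Rightarrow> nat \<Rightarrow> real" where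
  "jump E i k = (\<Sum>j<k. E i j)"

definition BI :: "(nat \<Rightarrow> nat \<Rightarrow> real) \<Rightarrow> nat \<Rightarrow> real \<Rightarrow> nat" where
  "BI E i t = BI0 i + card {k. 1 \<le> k \<and> jump E i k \<le> t}"

text \<open>TAlist E m = [T_1,...,T_{m+1}] for Model A.\<close>
primrec TAlist :: "(nat \<Rightarrow> nat \<Rightarrow> real) \<Rightarrow> nat \<Rightarrow> real list" where
  "TAlist E 0 = [0]"
| "TAlist E (Suc m) =
     (let ts = TAlist E m in
      ts @ [Inf {ts ! (i - 1) + jump E i k | i k.
                   1 \<le> k \<and> 1 \<le> i \<and> i \<le> length ts \<and> ts ! (i - 1) + jump E i k > last ts}])"

definition TA :: "(nat \<Rightarrow> nat \<Rightarrow> real) \<Rightarrow> nat \<Rightarrow> real" where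
  "TA E n = TAlist E (n - 1) ! (n - 1)"

text \<open>TBlist E m = [T_0,T_1,...,T_{m+1}] for Model B.\<close>
primrec TBlist :: "(nat \<Rightarrow> nat \<Rightarrow> real) \<Rightarrow> nat \<Rightarrow> real list" where
  "TBlist E 0 = [0, 0]"
| "TBlist E (Suc m) =
     (let ts = TBlist E m in
      ts @ [Inf {ts ! (i - 1) + jump E i k | i k.
                   1 \<le> k \<and> 1 \<le> i \<and> i \<le> length ts \<and> ts ! (i - 1) + jump E i k > last ts}])"

definition TB :: "(nat \<Rightarrow> nat \<Rightarrow> real) \<Rightarrow> nat \<Rightarrow> real" where
  "TB E n = TBlist E (n - 1) ! n"

definition DtildeA :: "(nat \<Rightarrow> nat \<Rightarrow> real) \<Rightarrow> nat \<Rightarrow> nat list" where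
  "DtildeA E n = map (\<lambda>i. BI E i (TA E n - TA E i)) [1..<n+1]"

definition DtildeB :: "(nat \<Rightarrow> nat \<Rightarrow> real) \<Rightarrow> nat \<Rightarrow> nat list" where
  "DtildeB E n = map (\<lambda>i. BI E i (TB E n - TB E (i - 1))) [1..<n+1]"

end

theory Submission
  imports Defs
begin

text \<open>Give node \<open>i\<close> the exponential holding times of its B.I. process and let the nodes
  present race: the node whose current holding time runs out first receives the next edge,
  and a new node is born at that moment.  By memorylessness the winner is \<open>w\<close> with
  probability proportional to its current rate \<open>D\<^sub>w + \<delta>\<close>, which is the attachment rule of
  the graph model, and the remaining holding times, measured from the ring, are again
  independent exponentials with the updated rates.  Hence the sequence of winners has the
  law of the sequence of attachment targets.  Pathwise, the ring times are the branching
  times \<open>T\<^sub>n\<close>, and the number of rings of node \<open>i\<close> up to \<open>T\<^sub>n\<close> is the number of jumps of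
  \<open>BI\<^sub>i\<close> during the time \<open>i\<close> has been alive.\<close>

section \<open>The graph models as sequences of attachment targets\<close>

definition add_counts :: "(nat \<Rightarrow> nat) \<Rightarrow> nat list \<Rightarrow> nat \<Rightarrow> nat" where
  "add_counts c ws = (\<lambda>i. c i + count_list ws i)"

text \<open>With \<open>a\<close> nodes whose degrees exceed their initial degrees by \<open>c\<close>, the next edge
  attaches to node \<open>i \<le> a\<close> with probability proportional to its B.I. rate.\<close>

definition target_pmf :: "real \<Rightarrow> nat \<Rightarrow> (nat \<Rightarrow> nat) \<Rightarrow> nat pmf" where
  "target_pmf \<delta> a c =
     pmf_of_list (map (\<lambda>i. (i, BIrate \<delta> i (c i) / (\<Sum>j=1..a. BIrate \<delta> j (c j)))) [1..<a+1])"

fun targets_pmf :: "real \<Rightarrow> nat \<Rightarrow> (nat \<Rightarrow> nat) \<Rightarrow> nat \<Rightarrow> nat list pmf" where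
  "targets_pmf \<delta> a c 0 = return_pmf []"
| "targets_pmf \<delta> a c (Suc n) =
     do { w \<leftarrow> target_pmf \<delta> a c;
          ws \<leftarrow> targets_pmf \<delta> (Suc a) (c(w := Suc (c w))) n;
          return_pmf (w # ws) }"

lemma add_counts_Nil [simp]: "add_counts c [] = c"
  by (simp add: add_counts_def)

lemma add_counts_Cons [simp]: "add_counts c (w # ws) = add_counts (c(w := Suc (c w))) ws"
  by (auto simp: add_counts_def fun_eq_iff)

lemma targets_pmf_snoc:
  "targets_pmf \<delta> a c (Suc n) =
     do { ws \<leftarrow> targets_pmf \<delta> a c n; w \<leftarrow> target_pmf \<delta> (a + n) (add_counts c ws); return_pmf (ws @ [w]) }"
proof (induction n arbitrary: a c)
  case (Suc n)
  show ?case
    by (subst targets_pmf.simps, subst Suc) (simp add: bind_return_pmf bind_assoc_pmf)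
qed (simp add: bind_return_pmf bind_assoc_pmf)

lemma BIrate_pos: "\<delta> > -1 \<Longrightarrow> BIrate \<delta> i k > 0"
  by (simp add: BIrate_def BI0_def)

lemma target_pmf_wf:
  assumes "\<delta> > -1" "a \<ge> 1"
  shows "pmf_of_list_wf (map (\<lambda>i. (i, BIrate \<delta> i (c i) / (\<Sum>j=1..a. BIrate \<delta> j (c j)))) [1..<a+1])"
proof -
  let ?S = "\<Sum>j=1..a. BIrate \<delta> j (c j)"
  have pos: "?S > 0"
    using assms by (intro sum_pos) (auto simp: BIrate_pos)
  have "sum_list (map (\<lambda>i. BIrate \<delta> i (c i) / ?S) [1..<a+1]) = (\<Sum>i\<in>set [1..<a+1]. BIrate \<delta> i (c i) / ?S)"
    by (rule sum_set_upt_conv_sum_list_nat[symmetric])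
  also have "set [1..<a+1] = {1..a}"
    by (auto simp del: upt_Suc)
  also have "(\<Sum>i\<in>{1..a}. BIrate \<delta> i (c i) / ?S) = (\<Sum>i=1..a. BIrate \<delta> i (c i)) / ?S"
    by (simp only: sum_divide_distrib)
  also have "\<dots> = 1"
    using pos by simp
  finally show ?thesis
    using assms pos
    by (intro pmf_of_list_wfI)
       (auto simp: o_def simp del: upt_Suc intro!: divide_nonneg_pos less_imp_le[OF BIrate_pos])
qed

lemma set_target_pmf:
  assumes "\<delta> > -1" "a \<ge> 1"
  shows "set_pmf (target_pmf \<delta> a c) \<subseteq> {1..a}"
proof -
  have "set_pmf (target_pmf \<delta> a c) \<subseteq> set (map fst (map (\<lambda>i. (i, BIrate \<delta> i (c i) / (\<Sum>j=1..a. BIrate \<delta> j (c j)))) [1..<a+1]))"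
    unfolding target_pmf_def by (rule set_pmf_of_list[OF target_pmf_wf[OF assms]])
  also have "\<dots> = {1..a}"
    by (auto simp del: upt_Suc)
  finally show ?thesis .
qed

lemma pmf_target_pmf:
  assumes "\<delta> > -1" "a \<ge> 1"
  shows "pmf (target_pmf \<delta> a c) w =
    (if w \<in> {1..a} then BIrate \<delta> w (c w) / (\<Sum>j=1..a. BIrate \<delta> j (c j)) else 0)"
proof -
  have "filter (\<lambda>i. i = w) [1..<a+1] = (if w \<in> {1..a} then [w] else [])"
    by (induction a) auto
  then show ?thesis
    unfolding target_pmf_def pmf_pmf_of_list[OF target_pmf_wf[OF assms]]
    by (simp add: filter_map o_def)
qed

lemma set_targets_pmf:
  assumes "\<delta> > -1" "a \<ge> 1" "ws \<in> set_pmf (targets_pmf \<delta> a c n)"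
  shows "length ws = n" "set ws \<subseteq> {1..a + n - 1}"
proof -
  have "length ws = n \<and> set ws \<subseteq> {1..a + n - 1}"
    using assms(2,3)
  proof (induction n arbitrary: a c ws)
    case (Suc n)
    then obtain w ws' where w: "w \<in> set_pmf (target_pmf \<delta> a c)"
      and ws': "ws' \<in> set_pmf (targets_pmf \<delta> (Suc a) (c(w := Suc (c w))) n)" and ws: "ws = w # ws'"
      by auto
    have "w \<in> {1..a}"
      using set_target_pmf[OF assms(1) Suc.prems(1)] w by blast
    with Suc.IH[OF _ ws'] show ?case
      unfolding ws by auto
  qed simp
  then show "length ws = n" "set ws \<subseteq> {1..a + n - 1}"
    by auto
qed

definition graph_of :: "nat list \<Rightarrow> graph" where
  "graph_of ws = (1,1) # map (\<lambda>m. (Suc (Suc m), ws ! m)) [0..<length ws]"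

lemma graph_of_Nil: "graph_of [] = [(1,1)]"
  by (simp add: graph_of_def)

lemma graph_of_snoc: "graph_of (ws @ [w]) = graph_of ws @ [(length ws + 2, w)]"
  by (simp add: graph_of_def nth_append)

lemma length_filter_Suc_Suc_upt:
  "length (filter (\<lambda>m. Suc (Suc m) = v) [0..<L]) = (if 2 \<le> v \<and> v \<le> Suc L then 1 else 0)"
proof -
  have "length (filter (\<lambda>m. Suc (Suc m) = v) [0..<L]) = card {m. m < L \<and> Suc (Suc m) = v}"
    by (auto simp: length_filter_conv_card intro!: arg_cong[where f=card])
  also have "{m. m < L \<and> Suc (Suc m) = v} = (if 2 \<le> v \<and> v \<le> Suc L then {v - 2} else {})"
    by auto
  finally show ?thesis by simp
qed

lemma deg_graph_of:
  assumes "1 \<le> v" "v \<le> Suc (length ws)"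
  shows "deg (graph_of ws) v = BI0 v + count_list ws v"
proof -
  have out: "length (filter (\<lambda>e. fst e = v) (graph_of ws)) = 1"
  proof -
    have "length (filter (\<lambda>e. fst e = v) (graph_of ws))
        = (if v = 1 then 1 else 0) + length (filter (\<lambda>m. Suc (Suc m) = v) [0..<length ws])"
      unfolding graph_of_def filter.simps length_filter_map by (simp add: o_def del: upt_Suc)
    then show ?thesis
      using assms by (simp only: length_filter_Suc_Suc_upt) auto
  qed
  have "length (filter (\<lambda>m. ws ! m = v) [0..<length ws])
      = length (filter ((=) v) (map (\<lambda>m. ws ! m) [0..<length ws]))"
    unfolding length_filter_map o_def by (intro arg_cong[where f=length] filter_cong) auto
  also have "\<dots> = count_list ws v"
    by (simp add: map_nth count_list_eq_length_filter)
  moreover have "length (filter (\<lambda>e. snd e = v) (graph_of ws))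
      = (if v = 1 then 1 else 0) + length (filter (\<lambda>m. ws ! m = v) [0..<length ws])"
    unfolding graph_of_def filter.simps length_filter_map by (simp add: o_def del: upt_Suc)
  ultimately show ?thesis
    unfolding deg_def out BI0_def by simp
qed

lemma sum_BI0: "N \<ge> 1 \<Longrightarrow> (\<Sum>j=1..N. real (BI0 j)) = real N + 1"
proof (induction N)
  case (Suc N)
  then show ?case
    by (cases "N = 0") (simp_all add: BI0_def)
qed simp

lemma sum_BIrate_add_counts:
  assumes "set ws \<subseteq> {1..N}" "N \<ge> 1"
  shows "(\<Sum>j=1..N. BIrate \<delta> j (add_counts (\<lambda>_. 0) ws j)) = real N + 1 + real (length ws) + real N * \<delta>"
proof -
  have "(\<Sum>j=1..N. real (count_list ws j)) = real (length ws)"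
    using sum_count_set[OF assms(1)] by (metis finite_atLeastAtMost of_nat_sum)
  then show ?thesis
    using sum_BI0[OF assms(2)] by (simp add: BIrate_def add_counts_def sum.distrib)
qed

lemma map_pmf_graph_of_targets_pmf_Suc:
  assumes "\<delta> > -1" "a \<ge> 1"
    and step: "\<And>ws. ws \<in> set_pmf (targets_pmf \<delta> a c m) \<Longrightarrow> P (graph_of ws) = target_pmf \<delta> (a + m) (add_counts c ws)"
  shows "map_pmf graph_of (targets_pmf \<delta> a c m) \<bind> (\<lambda>G. P G \<bind> (\<lambda>i. return_pmf (G @ [(Suc m + 1, i)])))
       = map_pmf graph_of (targets_pmf \<delta> a c (Suc m))"
  unfolding targets_pmf_snoc map_pmf_def bind_assoc_pmf bind_return_pmf
  by (intro bind_pmf_cong refl)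
     (auto simp: step graph_of_snoc set_targets_pmf(1)[OF assms(1,2)])

lemma graphA_eq_graph_of:
  assumes "\<delta> > -1"
  shows "graphA \<delta> (Suc m) = map_pmf graph_of (targets_pmf \<delta> 1 (\<lambda>_. 0) m)"
proof (induction m)
  case (Suc m)
  define P where "P G = pmf_of_list (map (\<lambda>i. (i, (real (deg G i) + \<delta>) / ((2 + \<delta>) * real (Suc m)))) [1..<Suc m+1])"
    for G
  have step: "P (graph_of ws) = target_pmf \<delta> (1 + m) (add_counts (\<lambda>_. 0) ws)"
    if "ws \<in> set_pmf (targets_pmf \<delta> 1 (\<lambda>_. 0) m)" for ws
  proof -
    note ws = set_targets_pmf[OF assms _ that]
    have "set ws \<subseteq> {1..1 + m}"
      using ws(2) by auto
    from sum_BIrate_add_counts[OF this, of \<delta>]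
    have "(\<Sum>j=1..1+m. BIrate \<delta> j (add_counts (\<lambda>_. 0) ws j)) = (2 + \<delta>) * real (Suc m)"
      using ws(1) by (simp add: algebra_simps)
    then show ?thesis
      unfolding target_pmf_def P_def
      by (intro arg_cong[where f=pmf_of_list] map_cong refl)
         (use ws in \<open>auto simp: deg_graph_of BIrate_def add_counts_def simp del: upt_Suc\<close>)
  qed
  have "graphA \<delta> (Suc (Suc m)) = graphA \<delta> (Suc m) \<bind> (\<lambda>G. P G \<bind> (\<lambda>i. return_pmf (G @ [(Suc m + 1, i)])))"
    by (simp add: P_def Let_def del: upt_Suc)
  also have "\<dots> = map_pmf graph_of (targets_pmf \<delta> 1 (\<lambda>_. 0) (Suc m))"
    unfolding Suc by (rule map_pmf_graph_of_targets_pmf_Suc[OF assms _ step]) simp_all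
  finally show ?case .
qed (simp add: graph_of_Nil)

text \<open>In Model B the newborn node may attach to itself, so it competes from the start:
  the target sequence begins with two candidate nodes.\<close>

lemma graphB_eq_graph_of:
  assumes "\<delta> > -1"
  shows "graphB \<delta> (Suc m) = map_pmf graph_of (targets_pmf \<delta> 2 (\<lambda>_. 0) m)"
proof (induction m)
  case (Suc m)
  define Z where "Z = (2 + \<delta>) * real (Suc m) + 1 + \<delta>"
  define P where "P G = pmf_of_list (map (\<lambda>i. (i, (real (deg G i) + \<delta>) / Z)) [1..<Suc m+1]
      @ [(Suc m + 1, (1 + \<delta>) / Z)])" for G
  have step: "P (graph_of ws) = target_pmf \<delta> (2 + m) (add_counts (\<lambda>_. 0) ws)"
    if "ws \<in> set_pmf (targets_pmf \<delta> 2 (\<lambda>_. 0) m)" for ws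
  proof -
    note ws = set_targets_pmf[OF assms _ that]
    have "set ws \<subseteq> {1..2 + m}"
      using ws(2) by auto
    from sum_BIrate_add_counts[OF this, of \<delta>]
    have "(\<Sum>j=1..2+m. BIrate \<delta> j (add_counts (\<lambda>_. 0) ws j)) = Z"
      using ws(1) by (simp add: Z_def algebra_simps)
    moreover have "count_list ws (Suc (Suc m)) = 0"
      using ws by (auto simp: count_list_0_iff)
    moreover have "[1..<2+m+1] = [1..<Suc m+1] @ [Suc m + 1]"
      by simp
    ultimately show ?thesis
      unfolding target_pmf_def P_def
      by (simp only: map_append)
         (intro arg_cong[where f=pmf_of_list] arg_cong2[where f=append] map_cong refl,
          use ws in \<open>auto simp: deg_graph_of BIrate_def add_counts_def BI0_def simp del: upt_Suc\<close>)
  qed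
  have "graphB \<delta> (Suc (Suc m)) = graphB \<delta> (Suc m) \<bind> (\<lambda>G. P G \<bind> (\<lambda>i. return_pmf (G @ [(Suc m + 1, i)])))"
    by (simp add: P_def Z_def Let_def del: upt_Suc)
  also have "\<dots> = map_pmf graph_of (targets_pmf \<delta> 2 (\<lambda>_. 0) (Suc m))"
    unfolding Suc by (rule map_pmf_graph_of_targets_pmf_Suc[OF assms _ step]) simp_all
  finally show ?case .
qed (simp add: graph_of_Nil)

definition degree_vector :: "nat \<Rightarrow> nat list \<Rightarrow> nat list" where
  "degree_vector n ws = map (\<lambda>i. BI0 i + count_list ws i) [1..<n+1]"

lemma degseq_map_graph_of:
  assumes "\<delta> > -1" "a \<ge> 1" "n \<ge> 1"
  shows "map_pmf (degseq n) (map_pmf graph_of (targets_pmf \<delta> a c (n - 1)))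
       = map_pmf (degree_vector n) (targets_pmf \<delta> a c (n - 1))"
  unfolding pmf.map_comp o_def degseq_def degree_vector_def
  by (intro map_pmf_cong map_cong refl)
     (use set_targets_pmf(1)[OF assms(1,2)] assms(3) in \<open>auto simp: deg_graph_of simp del: upt_Suc\<close>)

lemma degseq_graphA:
  assumes "\<delta> > -1" "n \<ge> 1"
  shows "map_pmf (degseq n) (graphA \<delta> n) = map_pmf (degree_vector n) (targets_pmf \<delta> 1 (\<lambda>_. 0) (n - 1))"
  using graphA_eq_graph_of[OF assms(1), of "n - 1"] degseq_map_graph_of[OF assms(1) _ assms(2)] assms(2)
  by simp

lemma degseq_graphB:
  assumes "\<delta> > -1" "n \<ge> 1"
  shows "map_pmf (degseq n) (graphB \<delta> n) = map_pmf (degree_vector n) (targets_pmf \<delta> 2 (\<lambda>_. 0) (n - 1))"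
  using graphB_eq_graph_of[OF assms(1), of "n - 1"] degseq_map_graph_of[OF assms(1) _ assms(2)] assms(2)
  by simp

section \<open>Exponential clocks\<close>

definition exp_measure :: "real \<Rightarrow> real measure" where
  "exp_measure r = density lborel (\<lambda>x. ennreal (exponential_density r x))"

lemma sets_exp_measure [simp, measurable_cong]: "sets (exp_measure r) = sets borel"
  by (simp add: exp_measure_def)

lemma space_exp_measure [simp]: "space (exp_measure r) = UNIV"
  by (simp add: exp_measure_def)

lemma prob_space_exp_measure: "r > 0 \<Longrightarrow> prob_space (exp_measure r)"
  unfolding exp_measure_def by (rule prob_space_exponential_density)

lemma emeasure_exp_measure_UNIV: "r > 0 \<Longrightarrow> emeasure (exp_measure r) UNIV = 1"
  using prob_space.emeasure_space_1[OF prob_space_exp_measure] by simp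

lemma emeasure_exp_measure:
  "G \<in> sets borel \<Longrightarrow>
    emeasure (exp_measure r) G = (\<integral>\<^sup>+ y. ennreal (exponential_density r y) * indicator G y \<partial>lborel)"
  unfolding exp_measure_def by (subst emeasure_density) auto

lemma AE_exp_measure_nonneg: "AE t in exp_measure r. 0 \<le> t"
  unfolding exp_measure_def by (subst AE_density) (auto simp: exponential_density_def)

lemma emeasure_exp_measure_pos_part:
  assumes G: "G \<in> sets borel"
  shows "emeasure (exp_measure r) {y. 0 < y \<and> y \<in> G} = emeasure (exp_measure r) G"
proof -
  let ?f = "\<lambda>y. ennreal (exponential_density r y)"
  have pos: "{y::real. 0 < y \<and> y \<in> G} \<in> sets borel"
    using G by measurable
  have "AE y in lborel. ?f y * indicator {y. 0 < y \<and> y \<in> G} y = ?f y * indicator G y"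
    using AE_lborel_singleton[of 0] by eventually_elim (auto simp: indicator_def exponential_density_def)
  then show ?thesis
    using G pos by (simp add: emeasure_exp_measure cong: nn_integral_cong_AE)
qed

lemma exp_measure_memoryless:
  assumes r: "r > 0" and t: "t \<ge> 0" and G: "G \<in> sets borel"
  shows "emeasure (exp_measure r) {y. t < y \<and> y - t \<in> G} = ennreal (exp (- r * t)) * emeasure (exp_measure r) G"
proof -
  let ?f = "\<lambda>y. ennreal (exponential_density r y)"
  let ?G = "{y. 0 < y \<and> y \<in> G}"
  have shifted: "{y. t < y \<and> y - t \<in> G} \<in> sets borel" and pos: "?G \<in> sets borel"
    using G by measurable
  have density: "?f (t + z) * indicator {y. t < y \<and> y - t \<in> G} (t + z) = ennreal (exp (- r * t)) * (?f z * indicator ?G z)"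
    for z
  proof (cases "0 < z \<and> z \<in> G")
    case True
    then have "exponential_density r (t + z) = exp (- r * t) * exponential_density r z"
      using t by (simp add: exponential_density_def algebra_simps mult_exp_exp)
    then show ?thesis
      using True exponential_density_nonneg[OF r, of z] by (simp add: indicator_def ennreal_mult mult_ac)
  qed (auto simp: indicator_def)
  have "emeasure (exp_measure r) {y. t < y \<and> y - t \<in> G}
      = (\<integral>\<^sup>+ y. ?f y * indicator {y. t < y \<and> y - t \<in> G} y \<partial>distr lborel borel ((+) t))"
    by (simp add: emeasure_exp_measure[OF shifted] lborel_distr_plus)
  also have "\<dots> = (\<integral>\<^sup>+ z. ennreal (exp (- r * t)) * (?f z * indicator ?G z) \<partial>lborel)"
    using shifted by (subst nn_integral_distr) (auto simp: density)
  also have "\<dots> = ennreal (exp (- r * t)) * emeasure (exp_measure r) ?G"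
    using pos by (simp add: nn_integral_cmult emeasure_exp_measure)
  finally show ?thesis
    using emeasure_exp_measure_pos_part[OF G] by simp
qed

lemma nn_integral_exp_measure_exp:
  assumes r: "r > 0" and s: "s \<ge> 0"
  shows "(\<integral>\<^sup>+ t. ennreal (exp (- s * t)) \<partial>exp_measure r) = ennreal (r / (r + s))"
proof -
  have "ennreal (exponential_density r t) * ennreal (exp (- s * t))
      = ennreal (r / (r + s)) * ennreal (exponential_density (r + s) t)" for t
  proof -
    have "exponential_density r t * exp (- s * t) = r / (r + s) * exponential_density (r + s) t"
      using r s by (auto simp: exponential_density_def field_simps mult_exp_exp)
    then show ?thesis
      using r s by (simp add: ennreal_mult'[symmetric] exponential_density_nonneg)
  qed
  then have "(\<integral>\<^sup>+ t. ennreal (exp (- s * t)) \<partial>exp_measure r)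
      = ennreal (r / (r + s)) * (\<integral>\<^sup>+ t. ennreal (exponential_density (r + s) t) \<partial>lborel)"
    unfolding exp_measure_def by (simp add: nn_integral_density nn_integral_cmult)
  also have "(\<integral>\<^sup>+ t. ennreal (exponential_density (r + s) t) \<partial>lborel) = 1"
    using emeasure_exp_measure[of UNIV "r + s"] emeasure_exp_measure_UNIV[of "r + s"] r s by simp
  finally show ?thesis
    by simp
qed

lemma sets_exponential_race_event:
  fixes r :: "'i \<Rightarrow> real" and G :: "'i \<Rightarrow> real set" and i0 :: 'i
  assumes fin: "finite K" and G: "\<And>l. l \<in> K \<Longrightarrow> G l \<in> sets borel"
  defines "P \<equiv> PiM (insert i0 K) (\<lambda>i. exp_measure (r i))"
  shows "{x \<in> space P. \<forall>l\<in>K. if l \<in> L then x i0 < x l \<and> x l - x i0 \<in> G l else x l \<in> G l} \<in> sets P"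
proof -
  have component: "(\<lambda>x. x l) \<in> borel_measurable P" if "l \<in> insert i0 K" for l
  proof -
    have "(\<lambda>x. x l) \<in> measurable P (exp_measure (r l))"
      unfolding P_def using that by (rule measurable_component_singleton)
    then show ?thesis
      by (simp add: measurable_cong_sets[OF refl sets_exp_measure])
  qed
  have "Measurable.pred P (\<lambda>x. \<forall>l\<in>K. if l \<in> L then x i0 < x l \<and> x l - x i0 \<in> G l else x l \<in> G l)"
  proof (rule pred_intros_finite(3)[OF fin])
    fix l assume l: "l \<in> K"
    have [measurable]: "(\<lambda>x. x l) \<in> borel_measurable P" "(\<lambda>x. x i0) \<in> borel_measurable P"
      "G l \<in> sets borel"
      using l by (auto intro: component G)
    show "Measurable.pred P (\<lambda>x. if l \<in> L then x i0 < x l \<and> x l - x i0 \<in> G l else x l \<in> G l)"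
      by measurable
  qed
  then show ?thesis
    unfolding pred_def .
qed

text \<open>Competing exponential clocks: given that clock \<open>i\<^sub>0\<close> rings before each clock in \<open>L\<close>,
  memorylessness makes the overshoots of those clocks fresh exponentials, independent of
  the remaining clocks.\<close>

lemma emeasure_exponential_race:
  fixes r :: "'i \<Rightarrow> real" and G :: "'i \<Rightarrow> real set"
  assumes fin: "finite K" and i0: "i0 \<notin> K" and r: "\<And>i. r i > 0" and L: "L \<subseteq> K"
    and G: "\<And>l. l \<in> K \<Longrightarrow> G l \<in> sets borel"
  defines "P \<equiv> PiM (insert i0 K) (\<lambda>i. exp_measure (r i))"
  shows "emeasure P {x \<in> space P. \<forall>l\<in>K. if l \<in> L then x i0 < x l \<and> x l - x i0 \<in> G l else x l \<in> G l}
       = ennreal (r i0 / (r i0 + (\<Sum>l\<in>L. r l))) * (\<Prod>l\<in>K. emeasure (exp_measure (r l)) (G l))"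
proof -
  let ?M = "\<lambda>i. exp_measure (r i)"
  interpret product_sigma_finite ?M
    using r by (simp add: product_sigma_finite_def prob_space_imp_sigma_finite prob_space_exp_measure)
  define S where "S = (\<Sum>l\<in>L. r l)"
  define C where "C = (\<Prod>l\<in>K. emeasure (?M l) (G l))"
  define X where "X = {x \<in> space P. \<forall>l\<in>K. if l \<in> L then x i0 < x l \<and> x l - x i0 \<in> G l else x l \<in> G l}"
  define B where "B = (\<lambda>t l. if l \<in> L then {y. t < y \<and> y - t \<in> G l} else G l)"
  have S: "S \<ge> 0"
    unfolding S_def using r by (intro sum_nonneg) (simp add: less_imp_le)
  have X: "X \<in> sets P"
    unfolding X_def P_def by (rule sets_exponential_race_event[OF fin G])
  have B: "B t l \<in> sets borel" if "l \<in> K" for t l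
  proof -
    have [measurable]: "G l \<in> sets borel"
      using G[OF that] .
    have "{y. t < y \<and> y - t \<in> G l} \<in> sets borel"
      by measurable
    then show ?thesis
      unfolding B_def using G[OF that] by simp
  qed
  have slice: "(\<integral>\<^sup>+ y. indicator X (y(i0 := t)) \<partial>PiM K ?M) = emeasure (PiM K ?M) (PiE K (B t))" for t
  proof -
    have "indicator X (y(i0 := t)) = (indicator (PiE K (B t)) y :: ennreal)" if "y \<in> space (PiM K ?M)" for y
      using that i0
      by (auto simp: indicator_def X_def B_def P_def space_PiM PiE_iff extensional_def split: if_splits)
    then have "(\<integral>\<^sup>+ y. indicator X (y(i0 := t)) \<partial>PiM K ?M) = (\<integral>\<^sup>+ y. indicator (PiE K (B t)) y \<partial>PiM K ?M)"
      by (rule nn_integral_cong)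
    also have "\<dots> = emeasure (PiM K ?M) (PiE K (B t))"
      by (intro nn_integral_indicator sets_PiM_I_finite fin) (simp add: B)
    finally show ?thesis .
  qed
  have product: "emeasure (PiM K ?M) (PiE K (B t)) = ennreal (exp (- S * t)) * C" if t: "t \<ge> 0" for t
  proof -
    have "emeasure (PiM K ?M) (PiE K (B t)) = (\<Prod>l\<in>K. emeasure (?M l) (B t l))"
      by (rule emeasure_PiM[OF fin]) (simp add: B)
    also have "\<dots> = (\<Prod>l\<in>K. (if l \<in> L then ennreal (exp (- r l * t)) else 1) * emeasure (?M l) (G l))"
      by (intro prod.cong refl)
         (simp add: B_def exp_measure_memoryless r t G)
    also have "\<dots> = (\<Prod>l\<in>K. if l \<in> L then ennreal (exp (- r l * t)) else 1) * C"
      by (simp add: prod.distrib C_def)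
    also have "(\<Prod>l\<in>K. if l \<in> L then ennreal (exp (- r l * t)) else 1) = (\<Prod>l\<in>L. ennreal (exp (- r l * t)))"
    proof -
      have "{l \<in> K. l \<in> L} = L"
        using L by blast
      then show ?thesis
        by (simp add: prod.If_cases[OF fin] Int_def)
    qed
    also have "\<dots> = ennreal (exp (- S * t))"
      using fin L
      by (simp add: prod_ennreal exp_sum[symmetric] S_def sum_distrib_right sum_negf finite_subset)
    finally show ?thesis .
  qed
  have "emeasure P X = (\<integral>\<^sup>+ x. indicator X x \<partial>P)"
    using X by simp
  also have "\<dots> = (\<integral>\<^sup>+ t. (\<integral>\<^sup>+ y. indicator X (y(i0 := t)) \<partial>PiM K ?M) \<partial>?M i0)"
    unfolding P_def by (rule product_nn_integral_insert_rev[OF fin i0]) (use X in \<open>simp add: P_def\<close>)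
  also have "\<dots> = (\<integral>\<^sup>+ t. ennreal (exp (- S * t)) * C \<partial>?M i0)"
    using AE_exp_measure_nonneg[of "r i0"]
    by (intro nn_integral_cong_AE) (auto elim!: eventually_mono simp: slice product)
  also have "\<dots> = (\<integral>\<^sup>+ t. ennreal (exp (- S * t)) \<partial>?M i0) * C"
    by (rule nn_integral_multc) simp
  also have "\<dots> = ennreal (r i0 / (r i0 + S)) * C"
    using nn_integral_exp_measure_exp[OF r S] by simp
  finally show ?thesis
    unfolding X_def S_def C_def .
qed

section \<open>One step of the race of exponential clocks\<close>

text \<open>A clock field \<open>F\<close> assigns to \<open>(i, k)\<close> the \<open>(k+1)\<close>-th holding time of node \<open>i\<close> that is
  still to come; in particular \<open>F (i, 0)\<close> is the residual time until node \<open>i\<close> jumps next.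
  Under \<open>clock_space \<delta> c\<close> these are independent exponentials whose rates account for the
  \<open>c i\<close> jumps node \<open>i\<close> has already made.\<close>

definition clock_index :: "(nat \<times> nat) set" where
  "clock_index = {p. 1 \<le> fst p}"

abbreviation clock_borel :: "(nat \<times> nat \<Rightarrow> real) measure" where
  "clock_borel \<equiv> PiM clock_index (\<lambda>_. borel)"

definition clock_rate :: "real \<Rightarrow> (nat \<Rightarrow> nat) \<Rightarrow> nat \<times> nat \<Rightarrow> real" where
  "clock_rate \<delta> c p = BIrate \<delta> (fst p) (c (fst p) + snd p)"

definition clock_space :: "real \<Rightarrow> (nat \<Rightarrow> nat) \<Rightarrow> (nat \<times> nat \<Rightarrow> real) measure" where
  "clock_space \<delta> c = PiM clock_index (\<lambda>p. exp_measure (clock_rate \<delta> c p))"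

definition rings_first :: "nat \<Rightarrow> (nat \<times> nat \<Rightarrow> real) \<Rightarrow> nat \<Rightarrow> bool" where
  "rings_first a F w \<longleftrightarrow> w \<in> {1..a} \<and> (\<forall>i\<in>{1..a}. i \<noteq> w \<longrightarrow> F (w, 0) < F (i, 0))"

definition rivals :: "nat \<Rightarrow> nat \<Rightarrow> (nat \<times> nat) set" where
  "rivals a w = (\<lambda>i. (i, 0)) ` ({1..a} - {w})"

text \<open>The clock field seen from the moment \<open>F (w, 0)\<close> at which \<open>w\<close> rings: the clocks of \<open>w\<close>
  move up by one, the residual times of the other active nodes \<open>i \<le> a\<close> shrink by \<open>F (w, 0)\<close>,
  and the clocks of nodes not yet born are untouched.\<close>

definition restart :: "nat \<Rightarrow> nat \<Rightarrow> (nat \<times> nat \<Rightarrow> real) \<Rightarrow> (nat \<times> nat \<Rightarrow> real)" where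
  "restart a w F = (\<lambda>p\<in>clock_index. if fst p = w then F (w, Suc (snd p))
                      else if fst p \<le> a \<and> snd p = 0 then F p - F (w, 0) else F p)"

lemma clock_rate_pos: "\<delta> > -1 \<Longrightarrow> clock_rate \<delta> c p > 0"
  by (simp add: clock_rate_def BIrate_pos)

lemma prob_space_clock_space: "\<delta> > -1 \<Longrightarrow> prob_space (clock_space \<delta> c)"
  unfolding clock_space_def by (intro prob_space_PiM prob_space_exp_measure clock_rate_pos)

lemma product_prob_space_clocks:
  assumes "\<delta> > -1"
  shows "product_prob_space (\<lambda>p. exp_measure (clock_rate \<delta> c p))"
proof -
  have "prob_space (exp_measure (clock_rate \<delta> c p))" for p
    by (intro prob_space_exp_measure clock_rate_pos assms)
  then show ?thesis
    by (simp add: product_prob_space_def product_sigma_finite_def product_prob_space_axioms_def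
          prob_space_imp_sigma_finite)
qed

lemma sets_clock_space: "sets (clock_space \<delta> c) = sets clock_borel"
  unfolding clock_space_def by (intro sets_PiM_cong) auto

lemma space_clock_space: "space (clock_space \<delta> c) = space clock_borel"
  unfolding clock_space_def by (simp add: space_PiM)

lemma rings_first_unique: "rings_first a F w \<Longrightarrow> rings_first a F w' \<Longrightarrow> w = w'"
  unfolding rings_first_def by force

lemma sets_rings_first: "{F \<in> space clock_borel. rings_first a F w} \<in> sets clock_borel"
proof (cases "w \<in> {1..a}")
  case True
  have [measurable]: "(\<lambda>F. F (i, 0)) \<in> borel_measurable clock_borel" if "1 \<le> i" for i
    using that by (intro measurable_component_singleton) (auto simp: clock_index_def)
  show ?thesis
    unfolding rings_first_def using True by measurable
qed (simp add: rings_first_def)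

lemma restart_apply:
  "fst p \<ge> 1 \<Longrightarrow> restart a w F p = (if fst p = w then F (w, Suc (snd p))
                      else if fst p \<le> a \<and> snd p = 0 then F p - F (w, 0) else F p)"
  by (simp add: restart_def clock_index_def)

lemma restart_in_space: "restart a w F \<in> space clock_borel"
  unfolding restart_def by (simp add: space_PiM)

lemma measurable_restart:
  assumes "w \<ge> 1"
  shows "restart a w \<in> measurable clock_borel clock_borel"
  unfolding restart_def
proof (rule measurable_restrict)
  fix p assume p: "p \<in> clock_index"
  have [measurable]: "(\<lambda>F. F q) \<in> borel_measurable clock_borel" if "q \<in> clock_index" for q
    using that by (rule measurable_component_singleton)
  have "(w, 0) \<in> clock_index" "(w, Suc (snd p)) \<in> clock_index"
    using assms by (auto simp: clock_index_def)
  then show "(\<lambda>F. if fst p = w then F (w, Suc (snd p)) else if fst p \<le> a \<and> snd p = 0 then F p - F (w, 0) else F p)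
       \<in> borel_measurable clock_borel"
    using p by measurable
qed

lemma rings_first_restart_iff:
  assumes w: "w \<in> {1..a}" and J: "J \<subseteq> clock_index"
  shows "rings_first a F w \<and> (\<forall>j\<in>J. restart a w F j \<in> A j) \<longleftrightarrow>
    (\<forall>l\<in>rivals a w. F (w, 0) < F l \<and> (l \<in> J \<longrightarrow> F l - F (w, 0) \<in> A l)) \<and>
    (\<forall>j\<in>J. fst j = w \<longrightarrow> F (w, Suc (snd j)) \<in> A j) \<and>
    (\<forall>j\<in>J. fst j \<noteq> w \<and> j \<notin> rivals a w \<longrightarrow> F j \<in> A j)"
proof -
  have rival: "fst l \<noteq> w" if "l \<in> rivals a w" for l
    using that by (auto simp: rivals_def)
  have restart_own: "restart a w F j = F (w, Suc (snd j))" if "j \<in> J" "fst j = w" for j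
    using that J by (auto simp: restart_apply clock_index_def)
  have restart_rival: "restart a w F j = F j - F (w, 0)" if "j \<in> J" "j \<in> rivals a w" for j
    using that J rival[OF that(2)] by (auto simp: restart_apply clock_index_def rivals_def)
  have restart_other: "restart a w F j = F j" if "j \<in> J" "fst j \<noteq> w" "j \<notin> rivals a w" for j
    using that J by (cases j) (auto simp: restart_apply clock_index_def rivals_def image_iff subset_iff)
  have first: "rings_first a F w \<longleftrightarrow> (\<forall>l\<in>rivals a w. F (w, 0) < F l)"
    using w by (auto simp: rings_first_def rivals_def)
  have "(\<forall>j\<in>J. restart a w F j \<in> A j) \<longleftrightarrow> (\<forall>j\<in>J. (fst j = w \<longrightarrow> F (w, Suc (snd j)) \<in> A j)
      \<and> (j \<in> rivals a w \<longrightarrow> F j - F (w, 0) \<in> A j) \<and> (fst j \<noteq> w \<and> j \<notin> rivals a w \<longrightarrow> F j \<in> A j))"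
    using rival by (intro ball_cong refl) (metis restart_own restart_rival restart_other)
  then show ?thesis
    unfolding first by blast
qed

lemma emeasure_rings_first_restart_cylinder:
  assumes \<delta>: "\<delta> > -1" and w: "w \<in> {1..a}" and J: "finite J" "J \<subseteq> clock_index"
    and A: "\<And>j. j \<in> J \<Longrightarrow> A j \<in> sets borel"
  shows "emeasure (clock_space \<delta> c) {F \<in> space (clock_space \<delta> c). rings_first a F w \<and> (\<forall>j\<in>J. restart a w F j \<in> A j)}
    = ennreal (clock_rate \<delta> c (w, 0) / (\<Sum>i=1..a. clock_rate \<delta> c (i, 0)))
      * (\<Prod>j\<in>J. emeasure (exp_measure (clock_rate \<delta> (c(w := Suc (c w))) j)) (A j))"
proof -
  define r where "r = clock_rate \<delta> c"
  define r' where "r' = clock_rate \<delta> (c(w := Suc (c w)))"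
  define M where "M = (\<lambda>p. exp_measure (r p))"
  \<comment> \<open>In terms of the original clocks the event is a race of \<open>F (w, 0)\<close> against the rivals
    \<open>R\<close>, whose overshoots must lie in \<open>A\<close>; the restarted clocks of \<open>w\<close> are its clocks \<open>J2\<close>
    shifted down by one, and the clocks in \<open>J1\<close> are unchanged.\<close>
  define R where "R = rivals a w"
  define Jw where "Jw = {j\<in>J. fst j = w}"
  define J1 where "J1 = {j\<in>J. fst j \<noteq> w \<and> j \<notin> R}"
  define J2 where "J2 = (\<lambda>j. (w, Suc (snd j))) ` Jw"
  define K where "K = R \<union> J1 \<union> J2"
  define H where "H = (\<lambda>l. if l \<in> R then (if l \<in> J then A l else UNIV)
                       else if l \<in> J2 then A (w, snd l - 1) else A l)"
  define X where "X = {x \<in> space (PiM (insert (w, 0) K) M).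
                         \<forall>l\<in>K. if l \<in> R then x (w, 0) < x l \<and> x l - x (w, 0) \<in> H l else x l \<in> H l}"
  interpret product_prob_space M clock_index
    unfolding M_def r_def by (rule product_prob_space_clocks[OF \<delta>])
  have r: "\<And>p. r p > 0"
    unfolding r_def by (rule clock_rate_pos[OF \<delta>])
  have finite: "finite R" "finite Jw" "finite J1" "finite J2" "finite K"
    using J(1) by (simp_all add: R_def rivals_def Jw_def J1_def J2_def K_def)
  have disjoint: "R \<inter> J1 = {}" "R \<inter> J2 = {}" "J1 \<inter> J2 = {}"
    by (auto simp: R_def rivals_def J1_def J2_def Jw_def)
  have wK: "(w, 0) \<notin> K"
    by (auto simp: K_def R_def rivals_def J1_def J2_def)
  have K: "insert (w, 0) K \<subseteq> clock_index"
    using w J(2) by (auto simp: K_def R_def rivals_def J1_def J2_def Jw_def clock_index_def)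
  have H_R: "H l = (if l \<in> J then A l else UNIV)" if "l \<in> R" for l
    using that by (simp add: H_def)
  have H_J1: "H l = A l" if "l \<in> J1" for l
    using that disjoint by (auto simp: H_def)
  have H_J2: "H l = A (w, snd l - 1)" if "l \<in> J2" for l
    using that disjoint by (auto simp: H_def)
  have H: "H l \<in> sets borel" if "l \<in> K" for l
    using that A by (auto simp: H_def K_def J1_def J2_def Jw_def)
  have event: "{F \<in> space (clock_space \<delta> c). rings_first a F w \<and> (\<forall>j\<in>J. restart a w F j \<in> A j)}
      = prod_emb clock_index M (insert (w, 0) K) X"
  proof -
    have pointwise: "(\<forall>l\<in>K. if l \<in> R then F (w, 0) < F l \<and> F l - F (w, 0) \<in> H l else F l \<in> H l)
        \<longleftrightarrow> rings_first a F w \<and> (\<forall>j\<in>J. restart a w F j \<in> A j)" for F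
    proof -
      have "(\<forall>l\<in>K. if l \<in> R then F (w, 0) < F l \<and> F l - F (w, 0) \<in> H l else F l \<in> H l)
          \<longleftrightarrow> (\<forall>l\<in>R. F (w, 0) < F l \<and> F l - F (w, 0) \<in> H l) \<and> (\<forall>l\<in>J2. F l \<in> H l) \<and> (\<forall>l\<in>J1. F l \<in> H l)"
        using disjoint unfolding K_def ball_Un by (auto simp: disjoint_iff)
      also have "\<dots> \<longleftrightarrow> (\<forall>l\<in>R. F (w, 0) < F l \<and> (l \<in> J \<longrightarrow> F l - F (w, 0) \<in> A l))
          \<and> (\<forall>j\<in>J. fst j = w \<longrightarrow> F (w, Suc (snd j)) \<in> A j) \<and> (\<forall>j\<in>J. fst j \<noteq> w \<and> j \<notin> R \<longrightarrow> F j \<in> A j)"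
      proof (intro conj_cong)
        show "(\<forall>l\<in>R. F (w, 0) < F l \<and> F l - F (w, 0) \<in> H l)
            \<longleftrightarrow> (\<forall>l\<in>R. F (w, 0) < F l \<and> (l \<in> J \<longrightarrow> F l - F (w, 0) \<in> A l))"
          using H_R by (intro ball_cong refl) auto
        have "(\<forall>l\<in>J2. F l \<in> H l) \<longleftrightarrow> (\<forall>l\<in>J2. F l \<in> A (w, snd l - 1))"
          using H_J2 by (intro ball_cong refl) auto
        then show "(\<forall>l\<in>J2. F l \<in> H l) \<longleftrightarrow> (\<forall>j\<in>J. fst j = w \<longrightarrow> F (w, Suc (snd j)) \<in> A j)"
          by (auto simp: J2_def Jw_def)
        show "(\<forall>l\<in>J1. F l \<in> H l) \<longleftrightarrow> (\<forall>j\<in>J. fst j \<noteq> w \<and> j \<notin> R \<longrightarrow> F j \<in> A j)"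
          using H_J1 unfolding J1_def by auto
      qed
      finally show ?thesis
        unfolding rings_first_restart_iff[OF w J(2)] R_def .
    qed
    moreover have "prod_emb clock_index M (insert (w, 0) K) X = {F \<in> space clock_borel.
        \<forall>l\<in>K. if l \<in> R then F (w, 0) < F l \<and> F l - F (w, 0) \<in> H l else F l \<in> H l}"
      by (auto simp: prod_emb_def X_def space_PiM M_def PiE_iff extensional_def)
    ultimately show ?thesis
      by (simp add: space_clock_space)
  qed
  have "emeasure (clock_space \<delta> c) (prod_emb clock_index M (insert (w, 0) K) X)
      = emeasure (PiM (insert (w, 0) K) M) X"
  proof (unfold clock_space_def, fold r_def, fold M_def, rule emeasure_PiM_emb'[OF K])
    show "X \<in> sets (PiM (insert (w, 0) K) M)"
      unfolding X_def M_def by (rule sets_exponential_race_event[OF finite(5) H])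
  qed (use finite in simp)
  also have "\<dots> = ennreal (r (w, 0) / (r (w, 0) + (\<Sum>l\<in>R. r l))) * (\<Prod>l\<in>K. emeasure (M l) (H l))"
    unfolding X_def M_def by (rule emeasure_exponential_race[OF finite(5) wK r _ H]) (auto simp: K_def)
  also have "r (w, 0) + (\<Sum>l\<in>R. r l) = (\<Sum>i=1..a. r (i, 0))"
    using w sum.remove[of "{1..a}" w "\<lambda>i. r (i, 0)"] by (simp add: R_def rivals_def sum.reindex inj_on_def)
  also have "(\<Prod>l\<in>K. emeasure (M l) (H l)) = (\<Prod>j\<in>J. emeasure (exp_measure (r' j)) (A j))"
  proof -
    have same_rate: "r' l = r l" if "fst l \<noteq> w" for l
      using that by (simp add: r_def r'_def clock_rate_def)
    have on_rivals: "(\<Prod>l\<in>R. emeasure (M l) (H l)) = (\<Prod>l\<in>J \<inter> R. emeasure (exp_measure (r' l)) (A l))"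
    proof -
      have "(\<Prod>l\<in>J \<inter> R. emeasure (exp_measure (r' l)) (A l)) = (\<Prod>l\<in>R. if l \<in> J then emeasure (exp_measure (r' l)) (A l) else 1)"
      proof -
        have "J \<inter> R = {l \<in> R. l \<in> J}"
          by blast
        then show ?thesis
          by (simp only: prod.inter_filter[OF finite(1)])
      qed
      also have "\<dots> = (\<Prod>l\<in>R. emeasure (M l) (H l))"
        by (intro prod.cong refl)
           (auto simp: H_def M_def R_def rivals_def same_rate emeasure_exp_measure_UNIV[OF r])
      finally show ?thesis by simp
    qed
    have on_J1: "(\<Prod>l\<in>J1. emeasure (M l) (H l)) = (\<Prod>l\<in>J1. emeasure (exp_measure (r' l)) (A l))"
      using disjoint by (intro prod.cong refl) (auto simp: H_def M_def J1_def same_rate)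
    have on_J2: "(\<Prod>l\<in>J2. emeasure (M l) (H l)) = (\<Prod>j\<in>Jw. emeasure (exp_measure (r' j)) (A j))"
    proof -
      have "inj_on (\<lambda>j. (w, Suc (snd j))) Jw"
        by (auto simp: Jw_def inj_on_def)
      moreover have "emeasure (M (w, Suc (snd j))) (H (w, Suc (snd j))) = emeasure (exp_measure (r' j)) (A j)"
        if "j \<in> Jw" for j
      proof -
        have "(w, Suc (snd j)) \<in> J2"
          using that by (auto simp: J2_def)
        then show ?thesis
          using that by (cases j) (auto simp: H_J2 M_def Jw_def r_def r'_def clock_rate_def)
      qed
      ultimately show ?thesis
        unfolding J2_def by (simp add: prod.reindex)
    qed
    have split_J: "J = ((J \<inter> R) \<union> J1) \<union> Jw" "(J \<inter> R) \<inter> J1 = {}" "((J \<inter> R) \<union> J1) \<inter> Jw = {}"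
      by (auto simp: J1_def Jw_def R_def rivals_def)
    have "(\<Prod>j\<in>J. emeasure (exp_measure (r' j)) (A j))
        = (\<Prod>l\<in>(J \<inter> R) \<union> J1. emeasure (exp_measure (r' l)) (A l)) * (\<Prod>j\<in>Jw. emeasure (exp_measure (r' j)) (A j))"
      by (subst split_J(1), rule prod.union_disjoint) (use finite split_J in auto)
    also have "(\<Prod>l\<in>(J \<inter> R) \<union> J1. emeasure (exp_measure (r' l)) (A l))
        = (\<Prod>l\<in>J \<inter> R. emeasure (exp_measure (r' l)) (A l)) * (\<Prod>l\<in>J1. emeasure (exp_measure (r' l)) (A l))"
      by (rule prod.union_disjoint) (use finite split_J in auto)
    finally have "(\<Prod>j\<in>J. emeasure (exp_measure (r' j)) (A j))
        = (\<Prod>l\<in>J \<inter> R. emeasure (exp_measure (r' l)) (A l)) * (\<Prod>l\<in>J1. emeasure (exp_measure (r' l)) (A l))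
          * (\<Prod>j\<in>Jw. emeasure (exp_measure (r' j)) (A j))" .
    moreover have "(\<Prod>l\<in>K. emeasure (M l) (H l))
        = (\<Prod>l\<in>R. emeasure (M l) (H l)) * (\<Prod>l\<in>J1. emeasure (M l) (H l)) * (\<Prod>l\<in>J2. emeasure (M l) (H l))"
      using finite disjoint unfolding K_def by (simp add: prod.union_disjoint Int_Un_distrib2)
    ultimately show ?thesis
      using on_rivals on_J1 on_J2 by simp
  qed
  finally show ?thesis
    unfolding event r_def r'_def .
qed

lemma sets_clock_space_rings_first:
  "{F \<in> space (clock_space \<delta> c). rings_first a F w} \<in> sets (clock_space \<delta> c)"
  unfolding sets_clock_space space_clock_space by (rule sets_rings_first)

lemma measurable_restart_clock_space:
  "w \<ge> 1 \<Longrightarrow> restart a w \<in> measurable (clock_space \<delta> c) (clock_space \<delta> c')"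
  using measurable_restart by (simp add: measurable_cong_sets[OF sets_clock_space sets_clock_space])

lemma distr_restart_rings_first:
  fixes c :: "nat \<Rightarrow> nat"
  assumes \<delta>: "\<delta> > -1" and w: "w \<in> {1..a}"
  defines "W \<equiv> {F \<in> space (clock_space \<delta> c). rings_first a F w}"
    and "c' \<equiv> c(w := Suc (c w))"
    and "p \<equiv> clock_rate \<delta> c (w, 0) / (\<Sum>i=1..a. clock_rate \<delta> c (i, 0))"
  shows "distr (density (clock_space \<delta> c) (indicator W)) (clock_space \<delta> c') (restart a w)
       = density (clock_space \<delta> c') (\<lambda>_. ennreal p)"
    (is "?D = ?Q")
proof (rule measure_eqI_PiM_infinite[where I=clock_index and M="\<lambda>p. exp_measure (clock_rate \<delta> c' p)"])
  interpret product_prob_space "\<lambda>p. exp_measure (clock_rate \<delta> c' p)" clock_index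
    by (rule product_prob_space_clocks[OF \<delta>])
  interpret clocks: prob_space "clock_space \<delta> c"
    by (rule prob_space_clock_space[OF \<delta>])
  have W: "W \<in> sets (clock_space \<delta> c)"
    unfolding W_def by (rule sets_clock_space_rings_first)
  have restart: "restart a w \<in> measurable (clock_space \<delta> c) (clock_space \<delta> c')"
    using w by (intro measurable_restart_clock_space) simp
  then have restart': "restart a w \<in> measurable (density (clock_space \<delta> c) (indicator W)) (clock_space \<delta> c')"
    by (simp add: measurable_cong_sets[OF sets_density refl])
  have emeasure_D: "emeasure ?D E = emeasure (clock_space \<delta> c) (W \<inter> (restart a w -` E \<inter> space (clock_space \<delta> c)))"
    if "E \<in> sets (clock_space \<delta> c')" for E
    using that emeasure_restricted[OF W measurable_sets[OF restart that]]
    by (simp add: emeasure_distr[OF restart'])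
  show "sets ?D = sets (PiM clock_index (\<lambda>p. exp_measure (clock_rate \<delta> c' p)))"
    "sets ?Q = sets (PiM clock_index (\<lambda>p. exp_measure (clock_rate \<delta> c' p)))"
    by (simp_all add: clock_space_def)
  show "finite_measure ?D"
    by (rule finite_measureI) (simp add: emeasure_D clocks.emeasure_finite)
  fix A J assume J: "finite J" "J \<subseteq> clock_index"
    and A: "\<And>i. i \<in> J \<Longrightarrow> A i \<in> sets (exp_measure (clock_rate \<delta> c' i))"
  let ?E = "prod_emb clock_index (\<lambda>p. exp_measure (clock_rate \<delta> c' p)) J (Pi\<^sub>E J A)"
  have E: "?E \<in> sets (clock_space \<delta> c')"
    unfolding clock_space_def using J A by (intro sets_PiM_I) auto
  have "W \<inter> (restart a w -` ?E \<inter> space (clock_space \<delta> c))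
      = {F \<in> space (clock_space \<delta> c). rings_first a F w \<and> (\<forall>j\<in>J. restart a w F j \<in> A j)}"
    using J(2) restart_in_space[of a w] by (auto simp: W_def prod_emb_def space_PiM PiE_iff)
  then have "emeasure ?D ?E = ennreal p * (\<Prod>j\<in>J. emeasure (exp_measure (clock_rate \<delta> c' j)) (A j))"
    by (simp only: emeasure_D[OF E], unfold p_def c'_def)
       (rule emeasure_rings_first_restart_cylinder[OF \<delta> w J], use A in simp)
  also have "\<dots> = emeasure ?Q ?E"
    using E by (simp add: emeasure_density_const clock_space_def emeasure_PiM_emb[OF J(2,1) A])
  finally show "emeasure ?D ?E = emeasure ?Q ?E" .
qed

lemma emeasure_rings_first_restart:
  assumes \<delta>: "\<delta> > -1" and w: "w \<in> {1..a}" and B: "B \<in> sets clock_borel"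
  shows "emeasure (clock_space \<delta> c) ({F \<in> space (clock_space \<delta> c). rings_first a F w} \<inter> restart a w -` B)
    = ennreal (clock_rate \<delta> c (w, 0) / (\<Sum>i=1..a. clock_rate \<delta> c (i, 0)))
      * emeasure (clock_space \<delta> (c(w := Suc (c w)))) B"
proof -
  let ?c' = "c(w := Suc (c w))"
  let ?W = "{F \<in> space (clock_space \<delta> c). rings_first a F w}"
  have restart: "restart a w \<in> measurable (clock_space \<delta> c) (clock_space \<delta> ?c')"
    using w by (intro measurable_restart_clock_space) simp
  have B': "B \<in> sets (clock_space \<delta> ?c')"
    using B by (simp add: sets_clock_space)
  have "?W \<inter> restart a w -` B = ?W \<inter> (restart a w -` B \<inter> space (clock_space \<delta> c))"
    by auto
  then have "emeasure (clock_space \<delta> c) (?W \<inter> restart a w -` B)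
      = emeasure (distr (density (clock_space \<delta> c) (indicator ?W)) (clock_space \<delta> ?c') (restart a w)) B"
    using B' restart
    by (simp add: emeasure_distr measurable_cong_sets[OF sets_density refl]
        emeasure_restricted[OF sets_clock_space_rings_first measurable_sets])
  then show ?thesis
    by (simp add: distr_restart_rings_first[OF \<delta> w] emeasure_density_const[OF B'])
qed

section \<open>Running the race\<close>

text \<open>The sequence of winners of \<open>n\<close> successive rounds, starting with \<open>a\<close> active nodes; node
  \<open>a + 1\<close> is born after the first round.  A tie leaves no unique winner and makes the race
  undefined, which happens only on a null set.\<close>

fun race :: "nat \<Rightarrow> nat \<Rightarrow> (nat \<times> nat \<Rightarrow> real) \<Rightarrow> nat list option" where
  "race a 0 F = Some []"
| "race a (Suc n) F = (if \<exists>w. rings_first a F w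
      then map_option (Cons (THE w. rings_first a F w)) (race (Suc a) n (restart a (THE w. rings_first a F w) F))
      else None)"

lemma race_Suc_eq_Some_iff:
  "race a (Suc n) F = Some (w # ws) \<longleftrightarrow> rings_first a F w \<and> race (Suc a) n (restart a w F) = Some ws"
proof (cases "\<exists>w. rings_first a F w")
  case True
  then obtain w' where w': "rings_first a F w'"
    by blast
  then have "(THE w. rings_first a F w) = w'"
    using rings_first_unique by blast
  then show ?thesis
    using w' rings_first_unique by auto
qed auto

lemma race_Suc_neq_Nil: "race a (Suc n) F \<noteq> Some []"
  by (auto split: if_splits)

lemma sets_race_eq_Some: "{F \<in> space clock_borel. race a n F = Some ws} \<in> sets clock_borel"
proof (induction n arbitrary: a ws)
  case 0
  show ?case
    by (cases "ws = []") auto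
next
  case (Suc n)
  show ?case
  proof (cases ws)
    case Nil
    then show ?thesis
      using race_Suc_neq_Nil by simp
  next
    case (Cons w ws')
    show ?thesis
    proof (cases "w \<ge> 1")
      case True
      have "{F \<in> space clock_borel. race a (Suc n) F = Some ws} = {F \<in> space clock_borel. rings_first a F w}
          \<inter> (restart a w -` {G \<in> space clock_borel. race (Suc a) n G = Some ws'} \<inter> space clock_borel)"
        using Cons restart_in_space by (auto simp: race_Suc_eq_Some_iff simp del: race.simps)
      also have "\<dots> \<in> sets clock_borel"
        by (intro sets.Int sets_rings_first measurable_sets[OF measurable_restart[OF True]] Suc.IH)
      finally show ?thesis .
    next
      case False
      then have "{F \<in> space clock_borel. race a (Suc n) F = Some ws} = {}"
        using Cons by (auto simp: race_Suc_eq_Some_iff rings_first_def simp del: race.simps)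
      then show ?thesis
        by (metis sets.empty_sets)
    qed
  qed
qed

lemma measurable_race: "race a n \<in> measurable clock_borel (count_space UNIV)"
proof (subst measurable_count_space_eq2_countable, intro conjI ballI)
  fix v :: "nat list option"
  show "race a n -` {v} \<inter> space clock_borel \<in> sets clock_borel"
  proof (cases v)
    case (Some ws)
    then have "race a n -` {v} \<inter> space clock_borel = {F \<in> space clock_borel. race a n F = Some ws}"
      by auto
    then show ?thesis
      using sets_race_eq_Some by simp
  next
    case None
    have "race a n -` {v} \<inter> space clock_borel
        = space clock_borel - (\<Union>ws. {F \<in> space clock_borel. race a n F = Some ws})"
      using None by auto
    also have "\<dots> \<in> sets clock_borel"
      by (intro sets.Diff sets.top sets.countable_UN') (auto intro: sets_race_eq_Some)
    finally show ?thesis .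
  qed
qed simp

lemma pmf_targets_pmf_Cons:
  "pmf (targets_pmf \<delta> a c (Suc n)) (w # ws)
     = pmf (target_pmf \<delta> a c) w * pmf (targets_pmf \<delta> (Suc a) (c(w := Suc (c w))) n) ws"
proof -
  let ?rest = "\<lambda>x. targets_pmf \<delta> (Suc a) (c(x := Suc (c x))) n"
  have "pmf (map_pmf (Cons x) (?rest x)) (w # ws) = (if x = w then pmf (?rest w) ws else 0)" for x
    by (auto simp: pmf_map_inj' pmf_eq_0_set_pmf)
  then have "ennreal (pmf (targets_pmf \<delta> a c (Suc n)) (w # ws))
      = (\<integral>\<^sup>+ x. ennreal (pmf (?rest w) ws) * indicator {w} x \<partial>measure_pmf (target_pmf \<delta> a c))"
    by (auto simp: ennreal_pmf_bind map_pmf_def[symmetric] indicator_def intro!: nn_integral_cong)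
  also have "\<dots> = ennreal (pmf (?rest w) ws) * emeasure (measure_pmf (target_pmf \<delta> a c)) {w}"
    by (rule nn_integral_cmult_indicator) simp
  also have "\<dots> = ennreal (pmf (target_pmf \<delta> a c) w * pmf (?rest w) ws)"
    by (simp add: emeasure_pmf_single ennreal_mult mult.commute)
  finally show ?thesis
    by simp
qed

lemma measure_eq_map_pmf_Some:
  fixes N :: "'b::countable option measure"
  assumes N: "prob_space N" "sets N = UNIV"
    and eq: "\<And>v. emeasure N {Some v} = ennreal (pmf p v)"
  shows "N = measure_pmf (map_pmf Some p)"
proof -
  interpret N: prob_space N by (rule N(1))
  let ?Q = "measure_pmf (map_pmf Some p)"
  have spN: "space N = UNIV"
    using sets_eq_imp_space_eq[of N "count_space UNIV"] N(2) by simp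
  have eqS: "emeasure N {Some v} = emeasure ?Q {Some v}" for v
    by (simp add: eq emeasure_pmf_single pmf_map_inj')
  have QN: "emeasure ?Q {None} = 0"
    by (simp add: emeasure_pmf_single pmf_eq_0_set_pmf)
  have "emeasure N (range Some) = (\<integral>\<^sup>+x. emeasure N {x} \<partial>count_space (range Some))"
    by (rule emeasure_countable_singleton) (auto simp: N(2))
  also have "\<dots> = (\<integral>\<^sup>+x. emeasure ?Q {x} \<partial>count_space (range Some))"
    by (intro nn_integral_cong) (auto simp: eqS)
  also have "\<dots> = emeasure ?Q (range Some)"
    by (rule emeasure_countable_singleton[symmetric]) auto
  also have "range (Some :: 'b \<Rightarrow> 'b option) = UNIV - {None}"
    by (simp add: UNIV_option_conv)
  also have "emeasure ?Q (UNIV - {None}) = emeasure ?Q UNIV - emeasure ?Q {None}"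
    using emeasure_compl[of "{None}" ?Q] by (simp add: measure_pmf.emeasure_finite)
  also have "\<dots> = 1" using QN measure_pmf.emeasure_space_1[of "map_pmf Some p"] by simp
  finally have NS: "emeasure N (UNIV - {None}) = 1" .
  have "emeasure N {None} = emeasure N (space N - (UNIV - {None}))" using spN by (simp add: Diff_Diff_Int)
  also have "\<dots> = emeasure N (space N) - emeasure N (UNIV - {None})"
    by (rule emeasure_compl) (auto simp: N(2) N.emeasure_finite)
  also have "\<dots> = 0" using NS N.emeasure_space_1 by simp
  finally have NN: "emeasure N {None} = 0" .
  show ?thesis
  proof (rule measure_eqI_countable[of _ UNIV])
    show "sets N = Pow UNIV" using N(2) by simp
    show "sets ?Q = Pow UNIV" by simp
    show "countable (UNIV :: 'b option set)" by simp
    fix x :: "'b option"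
    show "emeasure N {x} = emeasure ?Q {x}"
    proof (cases x)
      case None then show ?thesis using NN QN by simp
    next
      case (Some v) then show ?thesis using eqS by simp
    qed
  qed
qed

lemma emeasure_race_eq_Some:
  assumes \<delta>: "\<delta> > -1"
  shows "a \<ge> 1 \<Longrightarrow> emeasure (clock_space \<delta> c) {F \<in> space (clock_space \<delta> c). race a n F = Some v}
      = ennreal (pmf (targets_pmf \<delta> a c n) v)"
proof (induction n arbitrary: a c v)
  case 0
  interpret prob_space "clock_space \<delta> c"
    by (rule prob_space_clock_space[OF \<delta>])
  show ?case
    by (cases "v = []") (auto simp: emeasure_space_1 indicator_def)
next
  case (Suc n)
  show ?case
  proof (cases v)
    case Nil
    have "pmf (targets_pmf \<delta> a c (Suc n)) [] = 0"
      using set_targets_pmf(1)[OF \<delta> Suc.prems, of "[]" c "Suc n"] by (auto simp: pmf_eq_0_set_pmf)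
    then show ?thesis
      using Nil race_Suc_neq_Nil by (simp del: race.simps)
  next
    case (Cons w ws)
    let ?c' = "c(w := Suc (c w))"
    define B where "B = {G \<in> space clock_borel. race (Suc a) n G = Some ws}"
    have B: "B \<in> sets clock_borel"
      unfolding B_def by (rule sets_race_eq_Some)
    have event: "{F \<in> space (clock_space \<delta> c). race a (Suc n) F = Some (w # ws)}
        = {F \<in> space (clock_space \<delta> c). rings_first a F w} \<inter> restart a w -` B"
      unfolding B_def using restart_in_space by (auto simp: race_Suc_eq_Some_iff simp del: race.simps)
    show ?thesis
    proof (cases "w \<in> {1..a}")
      case True
      have "emeasure (clock_space \<delta> ?c') B = ennreal (pmf (targets_pmf \<delta> (Suc a) ?c' n) ws)"
        using Suc.IH[of "Suc a" ?c' ws] by (simp only: B_def space_clock_space le_add2 plus_1_eq_Suc)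
      moreover have "clock_rate \<delta> c (w, 0) / (\<Sum>i=1..a. clock_rate \<delta> c (i, 0)) = pmf (target_pmf \<delta> a c) w"
        using True by (simp add: pmf_target_pmf[OF \<delta> Suc.prems] clock_rate_def)
      ultimately show ?thesis
        unfolding Cons event emeasure_rings_first_restart[OF \<delta> True B] pmf_targets_pmf_Cons
        by (simp add: ennreal_mult)
    next
      case False
      then have "pmf (target_pmf \<delta> a c) w = 0"
        unfolding pmf_target_pmf[OF \<delta> Suc.prems] by (simp only: if_False)
      moreover have "{F \<in> space (clock_space \<delta> c). rings_first a F w} \<inter> restart a w -` B = {}"
        using False by (auto simp: rings_first_def)
      ultimately show ?thesis
        unfolding Cons event pmf_targets_pmf_Cons by (simp only: emeasure_empty mult_zero_left ennreal_0)
    qed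
  qed
qed

lemma distr_race:
  assumes \<delta>: "\<delta> > -1" and a: "a \<ge> 1"
  shows "distr (clock_space \<delta> c) (count_space UNIV) (race a n) = measure_pmf (map_pmf Some (targets_pmf \<delta> a c n))"
proof (rule measure_eq_map_pmf_Some)
  have race: "race a n \<in> measurable (clock_space \<delta> c) (count_space UNIV)"
    using measurable_race by (simp add: measurable_cong_sets[OF sets_clock_space refl])
  show "prob_space (distr (clock_space \<delta> c) (count_space UNIV) (race a n))"
    by (rule prob_space.prob_space_distr[OF prob_space_clock_space[OF \<delta>] race])
  have "race a n -` {Some v} \<inter> space (clock_space \<delta> c) = {F \<in> space (clock_space \<delta> c). race a n F = Some v}" for v
    by auto
  then show "emeasure (distr (clock_space \<delta> c) (count_space UNIV) (race a n)) {Some v}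
      = ennreal (pmf (targets_pmf \<delta> a c n) v)" for v
    by (simp add: emeasure_distr[OF race] emeasure_race_eq_Some[OF \<delta> a])
qed simp

section \<open>The race generates the branching times\<close>

definition next_branching :: "(nat \<Rightarrow> nat \<Rightarrow> real) \<Rightarrow> real list \<Rightarrow> real" where
  "next_branching E ts = Inf {ts ! (i - 1) + jump E i k | i k.
     1 \<le> k \<and> 1 \<le> i \<and> i \<le> length ts \<and> ts ! (i - 1) + jump E i k > last ts}"

primrec branching_list :: "real list \<Rightarrow> (nat \<Rightarrow> nat \<Rightarrow> real) \<Rightarrow> nat \<Rightarrow> real list" where
  "branching_list ts E 0 = ts"
| "branching_list ts E (Suc m) = branching_list ts E m @ [next_branching E (branching_list ts E m)]"

lemma TAlist_eq_branching_list: "TAlist E m = branching_list [0] E m"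
  by (induction m) (simp_all add: Let_def next_branching_def)

lemma TBlist_eq_branching_list: "TBlist E m = branching_list [0, 0] E m"
  by (induction m) (simp_all add: Let_def next_branching_def)

lemma branching_list_Suc_front:
  "branching_list ts E (Suc m) = branching_list (ts @ [next_branching E ts]) E m"
  by (induction m) simp_all

lemma length_branching_list: "length (branching_list ts E m) = length ts + m"
  by (induction m) simp_all

lemma branching_list_prefix: "j \<le> m \<Longrightarrow> \<exists>zs. branching_list ts E m = branching_list ts E j @ zs"
proof (induction m)
  case (Suc m)
  then show ?case
    by (cases "j = Suc m") auto
qed simp

lemma branching_list_nth:
  "j \<le> m \<Longrightarrow> p < length (branching_list ts E j) \<Longrightarrow> branching_list ts E j ! p = branching_list ts E m ! p"
  using branching_list_prefix[of j m ts E] by (auto simp: nth_append)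

lemma jump_0 [simp]: "jump E i 0 = 0"
  by (simp add: jump_def)

lemma jump_Suc: "jump E i (Suc k) = jump E i k + E i k"
  by (simp add: jump_def)

lemma strict_mono_jump: "(\<And>k. E i k > 0) \<Longrightarrow> strict_mono (jump E i)"
  by (rule strict_monoI_Suc) (simp add: jump_Suc)

lemma jump_le_jump_iff: "(\<And>k. E i k > 0) \<Longrightarrow> jump E i k \<le> jump E i k' \<longleftrightarrow> k \<le> k'"
  by (rule strict_mono_less_eq[OF strict_mono_jump])

text \<open>The state of the race at the current time \<open>last ts\<close>: node \<open>i \<le> a\<close> was born at
  \<open>ts ! (i - 1)\<close> and has jumped \<open>c i\<close> times since, \<open>F (i, 0)\<close> is the time left until its
  next jump and \<open>F (i, k)\<close> its later holding times; the clocks of nodes not yet born are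
  untouched.\<close>

definition race_inv ::
  "(nat \<Rightarrow> nat \<Rightarrow> real) \<Rightarrow> nat \<Rightarrow> real list \<Rightarrow> (nat \<Rightarrow> nat) \<Rightarrow> (nat \<times> nat \<Rightarrow> real) \<Rightarrow> bool" where
  "race_inv E a ts c F \<longleftrightarrow> length ts = a \<and> a \<ge> 1 \<and>
    (\<forall>i\<in>{1..a}. ts ! (i - 1) \<le> last ts \<and> jump E i (c i) \<le> last ts - ts ! (i - 1)
       \<and> F (i, 0) = ts ! (i - 1) + jump E i (Suc (c i)) - last ts \<and> F (i, 0) > 0
       \<and> (\<forall>k\<ge>1. F (i, k) = E i (c i + k))) \<and>
    (\<forall>i>a. c i = 0 \<and> (\<forall>k. F (i, k) = E i k))"

lemma next_branching_eq:
  assumes pos: "\<And>i k. i \<ge> 1 \<Longrightarrow> E i k > 0" and inv: "race_inv E a ts c F" and w: "rings_first a F w"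
  shows "next_branching E ts = last ts + F (w, 0)"
proof -
  let ?S = "{ts ! (i - 1) + jump E i k | i k.
    1 \<le> k \<and> 1 \<le> i \<and> i \<le> length ts \<and> ts ! (i - 1) + jump E i k > last ts}"
  have wa: "w \<in> {1..a}" using w by (simp add: rings_first_def)
  from inv have len: "length ts = a"
    and I: "\<And>i. i \<in> {1..a} \<Longrightarrow> ts ! (i - 1) \<le> last ts \<and> jump E i (c i) \<le> last ts - ts ! (i - 1)
       \<and> F (i, 0) = ts ! (i - 1) + jump E i (Suc (c i)) - last ts \<and> F (i, 0) > 0"
    unfolding race_inv_def by blast+
  have mem: "last ts + F (w, 0) \<in> ?S"
  proof -
    have "last ts + F (w, 0) = ts ! (w - 1) + jump E w (Suc (c w))" using I[OF wa] by simp
    moreover have "ts ! (w - 1) + jump E w (Suc (c w)) > last ts" using I[OF wa] by simp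
    ultimately show ?thesis unfolding mem_Collect_eq
      by (intro exI[of _ w] exI[of _ "Suc (c w)"]) (use wa len in auto)
  qed
  have low: "last ts + F (w, 0) \<le> y" if "y \<in> ?S" for y
  proof -
    from that obtain i k where y: "y = ts ! (i - 1) + jump E i k"
      and k: "1 \<le> k" and i: "1 \<le> i" "i \<le> length ts" and gt: "ts ! (i - 1) + jump E i k > last ts" by blast
    have ia: "i \<in> {1..a}" using i len by auto
    have posi: "\<And>k. E i k > 0" using pos i by auto
    have "\<not> jump E i k \<le> jump E i (c i)"
      using gt I[OF ia] by linarith
    then have "jump E i (Suc (c i)) \<le> jump E i k"
      by (simp add: jump_le_jump_iff[where E=E and i=i, OF posi])
    then have "y \<ge> last ts + F (i, 0)" using y I[OF ia] by simp
    moreover have "F (w, 0) \<le> F (i, 0)"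
      using w ia unfolding rings_first_def by (cases "i = w") (auto simp: less_imp_le)
    ultimately show ?thesis by simp
  qed
  show ?thesis unfolding next_branching_def by (rule cInf_eq_minimum[OF mem low])
qed

lemma race_inv_step:
  assumes pos: "\<And>i k. i \<ge> 1 \<Longrightarrow> E i k > 0" and inv: "race_inv E a ts c F" and w: "rings_first a F w"
  shows "race_inv E (Suc a) (ts @ [next_branching E ts]) (c(w := Suc (c w))) (restart a w F)"
proof -
  have wa: "w \<in> {1..a}" using w by (simp add: rings_first_def)
  from inv have len: "length ts = a"
    and I: "\<And>i. i \<in> {1..a} \<Longrightarrow> ts ! (i - 1) \<le> last ts \<and> jump E i (c i) \<le> last ts - ts ! (i - 1)
       \<and> F (i, 0) = ts ! (i - 1) + jump E i (Suc (c i)) - last ts \<and> F (i, 0) > 0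
       \<and> (\<forall>k\<ge>1. F (i, k) = E i (c i + k))"
    and O: "\<And>i. i > a \<Longrightarrow> c i = 0 \<and> (\<forall>k. F (i, k) = E i k)"
    unfolding race_inv_def by blast+
  define L' where "L' = last ts + F (w, 0)"
  have nx: "next_branching E ts = L'" unfolding L'_def by (rule next_branching_eq[OF pos inv w])
  define ts' where "ts' = ts @ [L']"
  define c' where "c' = c(w := Suc (c w))"
  have lt: "last ts' = L'" unfolding ts'_def by simp
  have nth': "ts' ! (i - 1) = (if i = Suc a then L' else ts ! (i - 1))" if "i \<in> {1..Suc a}" for i
    using that len unfolding ts'_def by (auto simp: nth_append)
  have Fw: "F (w, 0) > 0" using I[OF wa] by simp
  have Lw: "L' = ts ! (w - 1) + jump E w (Suc (c w))" using I[OF wa] unfolding L'_def by simp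
  have winlt: "F (w, 0) < F (i, 0)" if "i \<in> {1..a}" "i \<noteq> w" for i
    using w that unfolding rings_first_def by auto
  have part1: "ts' ! (i - 1) \<le> last ts' \<and> jump E i (c' i) \<le> last ts' - ts' ! (i - 1)
       \<and> restart a w F (i, 0) = ts' ! (i - 1) + jump E i (Suc (c' i)) - last ts' \<and> restart a w F (i, 0) > 0
       \<and> (\<forall>k\<ge>1. restart a w F (i, k) = E i (c' i + k))" if i: "i \<in> {1..Suc a}" for i
  proof (cases "i = Suc a")
    case True
    have "i \<noteq> w" using True wa by auto
    then show ?thesis using True O[of "Suc a"] pos[of "Suc a"] i unfolding lt nth'[OF i] c'_def
      by (auto simp: restart_apply jump_Suc)
  next
    case False
    then have ia: "i \<in> {1..a}" using i by auto
    show ?thesis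
    proof (cases "i = w")
      case True
      have posw: "E w (c w) > 0" "\<And>k. E w k > 0" using pos wa by auto
      show ?thesis using True False I[OF ia] Fw Lw posw wa unfolding lt nth'[OF i] c'_def
        by (auto simp: restart_apply jump_Suc L'_def algebra_simps)
    next
      case nw: False
      have "jump E i (c i) \<le> last ts - ts ! (i - 1)" using I[OF ia] by simp
      then show ?thesis using nw False I[OF ia] Fw winlt[OF ia nw] ia unfolding lt nth'[OF i] c'_def L'_def
        by (auto simp: restart_apply)
    qed
  qed
  have part2: "c' i = 0 \<and> (\<forall>k. restart a w F (i, k) = E i k)" if "i > Suc a" for i
    using that O[of i] wa unfolding c'_def by (auto simp: restart_apply)
  have "length ts' = Suc a"
    using len by (simp add: ts'_def)
  moreover have "\<forall>i\<in>{1..Suc a}. ts' ! (i - 1) \<le> last ts' \<and> jump E i (c' i) \<le> last ts' - ts' ! (i - 1) \<and>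
      restart a w F (i, 0) = ts' ! (i - 1) + jump E i (Suc (c' i)) - last ts' \<and>
      0 < restart a w F (i, 0) \<and> (\<forall>k\<ge>1. restart a w F (i, k) = E i (c' i + k))"
    using part1 by blast
  ultimately have "race_inv E (Suc a) ts' c' (restart a w F)"
    unfolding race_inv_def by (intro conjI allI impI part2) (assumption | simp)+
  then show ?thesis unfolding nx ts'_def c'_def .
qed

lemma race_inv_race:
  assumes pos: "\<And>i k. i \<ge> 1 \<Longrightarrow> E i k > 0"
  shows "race_inv E a ts c F \<Longrightarrow> race a m F = Some ws
    \<Longrightarrow> \<exists>F'. race_inv E (a + m) (branching_list ts E m) (add_counts c ws) F'"
proof (induction m arbitrary: a ts c F ws)
  case 0 then show ?case by auto
next
  case (Suc m)
  obtain w ws' where ws: "ws = w # ws'"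
    using Suc.prems(2) race_Suc_neq_Nil by (cases ws) auto
  have w: "rings_first a F w" and r: "race (Suc a) m (restart a w F) = Some ws'"
    using Suc.prems(2) unfolding ws race_Suc_eq_Some_iff by auto
  have "race_inv E (Suc a) (ts @ [next_branching E ts]) (c(w := Suc (c w))) (restart a w F)"
    by (rule race_inv_step[OF pos Suc.prems(1) w])
  from Suc.IH[OF this r] show ?case
    unfolding ws branching_list_Suc_front add_counts_Cons by (simp only: add_Suc_shift)
qed

lemma race_inv_card:
  assumes pos: "\<And>i k. i \<ge> 1 \<Longrightarrow> E i k > 0" and inv: "race_inv E a ts c F" and i: "i \<in> {1..a}"
  shows "card {k. 1 \<le> k \<and> jump E i k \<le> last ts - ts ! (i - 1)} = c i"
proof -
  have posi: "\<And>k. E i k > 0"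
    using pos i by auto
  from inv i have before: "jump E i (c i) \<le> last ts - ts ! (i - 1)"
    and "ts ! (i - 1) + jump E i (Suc (c i)) - last ts > 0"
    unfolding race_inv_def by (blast, metis)
  then have after: "last ts - ts ! (i - 1) < jump E i (Suc (c i))"
    by linarith
  have "jump E i k \<le> last ts - ts ! (i - 1) \<longleftrightarrow> k \<le> c i" for k
  proof
    assume "jump E i k \<le> last ts - ts ! (i - 1)"
    with after have "\<not> jump E i (Suc (c i)) \<le> jump E i k"
      by linarith
    then show "k \<le> c i"
      by (simp add: jump_le_jump_iff[where E=E and i=i, OF posi])
  next
    assume "k \<le> c i"
    then show "jump E i k \<le> last ts - ts ! (i - 1)"
      using before jump_le_jump_iff[where E=E and i=i, OF posi, of k "c i"] by linarith
  qed
  then have "{k. 1 \<le> k \<and> jump E i k \<le> last ts - ts ! (i - 1)} = {1..c i}"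
    by (simp add: atLeastAtMost_def atLeast_def atMost_def Collect_conj_eq)
  then show ?thesis
    by simp
qed

definition clock_field :: "(nat \<Rightarrow> nat \<Rightarrow> real) \<Rightarrow> nat \<times> nat \<Rightarrow> real" where
  "clock_field E = (\<lambda>p\<in>clock_index. E (fst p) (snd p))"

lemma clock_field_apply: "i \<ge> 1 \<Longrightarrow> clock_field E (i, k) = E i k"
  by (simp add: clock_field_def clock_index_def)

lemma race_inv_initA:
  assumes "\<And>i k. i \<ge> 1 \<Longrightarrow> E i k > 0"
  shows "race_inv E 1 [0] (\<lambda>_. 0) (clock_field E)"
  using assms by (auto simp: race_inv_def clock_field_apply jump_Suc)

lemma race_inv_initB:
  assumes "\<And>i k. i \<ge> 1 \<Longrightarrow> E i k > 0"
  shows "race_inv E 2 [0, 0] (\<lambda>_. 0) (clock_field E)"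
proof -
  have "[0, 0::real] ! (i - 1) = 0" if "i \<in> {1..2}" for i :: nat
    using that by (cases "i = 1") auto
  then show ?thesis
    using assms by (auto simp: race_inv_def clock_field_apply jump_Suc)
qed

lemma degree_vector_race_inv:
  assumes pos: "\<And>i k. i \<ge> 1 \<Longrightarrow> E i k > 0"
    and inv: "race_inv E a ts (add_counts (\<lambda>_. 0) ws) F" and "n \<le> a"
  shows "map (\<lambda>i. BI E i (last ts - ts ! (i - 1))) [1..<n+1] = degree_vector n ws"
  unfolding degree_vector_def
proof (intro map_cong refl)
  fix i assume "i \<in> set [1..<n+1]"
  then have "i \<in> {1..a}"
    using \<open>n \<le> a\<close> by auto
  then show "BI E i (last ts - ts ! (i - 1)) = BI0 i + count_list ws i"
    using race_inv_card[OF pos inv] by (simp add: BI_def add_counts_def)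
qed

lemma DtildeA_eq_degree_vector:
  assumes pos: "\<And>i k. i \<ge> 1 \<Longrightarrow> E i k > 0" and n: "n \<ge> 1"
    and race: "race 1 (n - 1) (clock_field E) = Some ws"
  shows "DtildeA E n = degree_vector n ws"
proof -
  define ts where "ts = branching_list [0] E (n - 1)"
  obtain F where inv: "race_inv E (1 + (n - 1)) ts (add_counts (\<lambda>_. 0) ws) F"
    using race_inv_race[OF pos race_inv_initA[OF pos] race] unfolding ts_def by blast
  have len: "length ts = n"
    unfolding ts_def using n by (simp add: length_branching_list)
  have "TA E i = ts ! (i - 1)" if "i \<in> {1..n}" for i
    unfolding TA_def TAlist_eq_branching_list ts_def
    using that by (intro branching_list_nth) (auto simp: length_branching_list)
  moreover have "TA E n = last ts"
    using calculation[of n] len n by (simp add: last_conv_nth[of ts] length_0_conv[symmetric])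
  ultimately have "DtildeA E n = map (\<lambda>i. BI E i (last ts - ts ! (i - 1))) [1..<n+1]"
    unfolding DtildeA_def by (intro map_cong refl) auto
  also have "\<dots> = degree_vector n ws"
    using degree_vector_race_inv[OF pos inv, of n] by simp
  finally show ?thesis .
qed

lemma DtildeB_eq_degree_vector:
  assumes pos: "\<And>i k. i \<ge> 1 \<Longrightarrow> E i k > 0" and n: "n \<ge> 1"
    and race: "race 2 (n - 1) (clock_field E) = Some ws"
  shows "DtildeB E n = degree_vector n ws"
proof -
  define ts where "ts = branching_list [0, 0] E (n - 1)"
  obtain F where inv: "race_inv E (2 + (n - 1)) ts (add_counts (\<lambda>_. 0) ws) F"
    using race_inv_race[OF pos race_inv_initB[OF pos] race] unfolding ts_def by blast
  have len: "length ts = n + 1"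
    unfolding ts_def using n by (simp add: length_branching_list)
  have TB: "TB E i = ts ! i" if "i \<le> n" for i
    unfolding TB_def TBlist_eq_branching_list ts_def
    using that by (intro branching_list_nth) (auto simp: length_branching_list)
  then have "TB E n = last ts"
    using len by (simp add: last_conv_nth[of ts] length_0_conv[symmetric])
  then have "DtildeB E n = map (\<lambda>i. BI E i (last ts - ts ! (i - 1))) [1..<n+1]"
    unfolding DtildeB_def using TB by (intro map_cong refl) auto
  also have "\<dots> = degree_vector n ws"
    using degree_vector_race_inv[OF pos inv, of n] by simp
  finally show ?thesis .
qed

lemma INF_filter_top:
  fixes g :: "'j \<Rightarrow> ereal"
  shows "(INF j\<in>J. if P j then g j else \<infinity>) = (INF j\<in>{j\<in>J. P j}. g j)"
proof (rule antisym)
  show "(INF j\<in>J. if P j then g j else \<infinity>) \<le> (INF j\<in>{j\<in>J. P j}. g j)"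
  proof (rule INF_greatest)
    fix j assume "j \<in> {j\<in>J. P j}"
    then have "(INF j\<in>J. if P j then g j else \<infinity>) \<le> (if P j then g j else \<infinity>)" by (intro INF_lower) auto
    then show "(INF j\<in>J. if P j then g j else \<infinity>) \<le> g j" using \<open>j \<in> {j\<in>J. P j}\<close> by simp
  qed
  show "(INF j\<in>{j\<in>J. P j}. g j) \<le> (INF j\<in>J. if P j then g j else \<infinity>)"
  proof (rule INF_greatest)
    fix j assume j: "j \<in> J"
    show "(INF j\<in>{j\<in>J. P j}. g j) \<le> (if P j then g j else \<infinity>)"
      using j by (cases "P j") (auto intro: INF_lower)
  qed
qed

lemma borel_measurable_Inf_above:
  fixes J :: "'j::countable set" and v :: "'j \<Rightarrow> 'a \<Rightarrow> real"
  assumes v: "\<And>j. j \<in> J \<Longrightarrow> v j \<in> borel_measurable N" and l: "l \<in> borel_measurable N"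
  shows "(\<lambda>\<omega>. Inf {v j \<omega> | j. j \<in> J \<and> v j \<omega> > l \<omega>}) \<in> borel_measurable N"
proof -
  define g where "g = (\<lambda>\<omega>. if \<exists>j\<in>J. v j \<omega> > l \<omega> then real_of_ereal (INF j\<in>J. if v j \<omega> > l \<omega> then ereal (v j \<omega>) else \<infinity>) else Inf {})"
  have eq: "Inf {v j \<omega> | j. j \<in> J \<and> v j \<omega> > l \<omega>} = g \<omega>" for \<omega>
  proof (cases "\<exists>j\<in>J. v j \<omega> > l \<omega>")
    case True
    let ?S = "{v j \<omega> | j. j \<in> J \<and> v j \<omega> > l \<omega>}"
    have Sim: "?S = (\<lambda>j. v j \<omega>) ` {j\<in>J. v j \<omega> > l \<omega>}" by auto
    have ne: "?S \<noteq> {}" using True by auto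
    have bdd: "bdd_below ?S" by (rule bdd_belowI[of _ "l \<omega>"]) auto
    have "ereal (Inf ?S) = Inf (ereal ` ?S)" by (rule ereal_Inf'[OF bdd ne])
    also have "\<dots> = (INF j\<in>{j\<in>J. v j \<omega> > l \<omega>}. ereal (v j \<omega>))" unfolding Sim image_image ..
    also have "\<dots> = (INF j\<in>J. if v j \<omega> > l \<omega> then ereal (v j \<omega>) else \<infinity>)"
      by (rule INF_filter_top[symmetric])
    finally have h: "(INF j\<in>J. if v j \<omega> > l \<omega> then ereal (v j \<omega>) else \<infinity>) = ereal (Inf ?S)" by simp
    have "Inf ?S = real_of_ereal (INF j\<in>J. if v j \<omega> > l \<omega> then ereal (v j \<omega>) else \<infinity>)"
      unfolding h by simp
    then show ?thesis using True unfolding g_def by simp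
  next
    case False
    then have e: "{v j \<omega> | j. j \<in> J \<and> v j \<omega> > l \<omega>} = {}" by auto
    show ?thesis unfolding g_def e using False by simp
  qed
  have pr: "Measurable.pred N (\<lambda>\<omega>. \<exists>j\<in>J. v j \<omega> > l \<omega>)"
  proof (rule pred_intros_countable_bounded(4))
    fix j assume j: "j \<in> J"
    have [measurable]: "v j \<in> borel_measurable N" by (rule v[OF j])
    have [measurable]: "l \<in> borel_measurable N" by (rule l)
    show "Measurable.pred N (\<lambda>\<omega>. v j \<omega> > l \<omega>)" by measurable
  qed
  have im: "(\<lambda>\<omega>. INF j\<in>J. if v j \<omega> > l \<omega> then ereal (v j \<omega>) else \<infinity>) \<in> borel_measurable N"
  proof (rule borel_measurable_INF)
    show "countable J" by simp
    fix j assume j: "j \<in> J"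
    have [measurable]: "v j \<in> borel_measurable N" by (rule v[OF j])
    have [measurable]: "l \<in> borel_measurable N" by (rule l)
    show "(\<lambda>\<omega>. if v j \<omega> > l \<omega> then ereal (v j \<omega>) else \<infinity>) \<in> borel_measurable N" by measurable
  qed
  have "g \<in> borel_measurable N"
    unfolding g_def by (rule measurable_If[OF borel_measurable_real_of_ereal[OF im] measurable_const pr[unfolded pred_def]]) simp
  then show ?thesis unfolding eq[abs_def] .
qed

lemma measurable_card_Collect:
  assumes P: "\<And>k. Measurable.pred N (P k)"
  shows "(\<lambda>\<omega>. card {k::nat. P k \<omega>}) \<in> measurable N (count_space UNIV)"
proof (subst measurable_count_space_eq2_countable, intro conjI ballI)
  show "(\<lambda>\<omega>. card {k. P k \<omega>}) \<in> space N \<rightarrow> UNIV" by simp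
  fix m :: nat
  have [measurable]: "\<And>k. Measurable.pred N (P k)" by (rule P)
  have eq: "(\<lambda>\<omega>. card {k. P k \<omega>}) -` {m} \<inter> space N =
     (\<Union>K\<in>{K. finite K \<and> card K = m}. {\<omega>\<in>space N. \<forall>k. P k \<omega> \<longleftrightarrow> k \<in> K}) \<union>
     {\<omega>\<in>space N. m = 0 \<and> (\<forall>L. \<exists>k\<ge>L. P k \<omega>)}"
  proof (intro set_eqI iffI)
    fix \<omega> assume "\<omega> \<in> (\<lambda>\<omega>. card {k. P k \<omega>}) -` {m} \<inter> space N"
    then have c: "card {k. P k \<omega>} = m" "\<omega> \<in> space N" by auto
    show "\<omega> \<in> (\<Union>K\<in>{K. finite K \<and> card K = m}. {\<omega>\<in>space N. \<forall>k. P k \<omega> \<longleftrightarrow> k \<in> K}) \<union>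
     {\<omega>\<in>space N. m = 0 \<and> (\<forall>L. \<exists>k\<ge>L. P k \<omega>)}"
    proof (cases "finite {k. P k \<omega>}")
      case True then show ?thesis using c by auto
    next
      case False
      then have "\<forall>L. \<exists>k\<ge>L. P k \<omega>" using infinite_nat_iff_unbounded_le by auto
      then show ?thesis using c False by auto
    qed
  next
    fix \<omega> assume h: "\<omega> \<in> (\<Union>K\<in>{K. finite K \<and> card K = m}. {\<omega>\<in>space N. \<forall>k. P k \<omega> \<longleftrightarrow> k \<in> K}) \<union>
     {\<omega>\<in>space N. m = 0 \<and> (\<forall>L. \<exists>k\<ge>L. P k \<omega>)}"
    show "\<omega> \<in> (\<lambda>\<omega>. card {k. P k \<omega>}) -` {m} \<inter> space N"
    proof (cases "\<exists>K. finite K \<and> card K = m \<and> (\<forall>k. P k \<omega> \<longleftrightarrow> k \<in> K) \<and> \<omega> \<in> space N")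
      case True
      then obtain K where K: "finite K" "card K = m" "\<forall>k. P k \<omega> \<longleftrightarrow> k \<in> K" "\<omega> \<in> space N" by auto
      then have "{k. P k \<omega>} = K" by auto
      then show ?thesis using K by auto
    next
      case False
      then have "\<omega> \<in> space N" "m = 0" "\<forall>L. \<exists>k\<ge>L. P k \<omega>" using h by auto
      then show ?thesis using infinite_nat_iff_unbounded_le by auto
    qed
  qed
  have c1: "(\<Union>K\<in>{K. finite K \<and> card K = m}. {\<omega>\<in>space N. \<forall>k. P k \<omega> \<longleftrightarrow> k \<in> K}) \<in> sets N"
  proof (rule sets.countable_UN'')
    show "countable {K::nat set. finite K \<and> card K = m}"
      by (rule countable_subset[OF _ countable_Collect_finite]) auto
    fix K :: "nat set"
    show "{\<omega>\<in>space N. \<forall>k. P k \<omega> \<longleftrightarrow> k \<in> K} \<in> sets N" by measurable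
  qed
  have c2: "{\<omega>\<in>space N. m = 0 \<and> (\<forall>L. \<exists>k\<ge>L. P k \<omega>)} \<in> sets N" by measurable
  show "(\<lambda>\<omega>. card {k. P k \<omega>}) -` {m} \<inter> space N \<in> sets N" unfolding eq using c1 c2 by auto
qed

lemma measurable_map_list:
  assumes "\<And>i. i \<in> set xs \<Longrightarrow> f i \<in> measurable N (count_space (UNIV :: 'b::countable set))"
  shows "(\<lambda>\<omega>. map (\<lambda>i. f i \<omega>) xs) \<in> measurable N (count_space UNIV)"
  using assms
proof (induction xs)
  case Nil then show ?case by simp
next
  case (Cons x xs)
  have [measurable]: "f x \<in> measurable N (count_space UNIV)" using Cons.prems by simp
  have [measurable]: "(\<lambda>\<omega>. map (\<lambda>i. f i \<omega>) xs) \<in> measurable N (count_space UNIV)" using Cons by simp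
  have "(\<lambda>\<omega>. (f x \<omega>, map (\<lambda>i. f i \<omega>) xs)) \<in> measurable N (count_space UNIV \<Otimes>\<^sub>M count_space UNIV)"
    by measurable
  then have "(\<lambda>\<omega>. (f x \<omega>, map (\<lambda>i. f i \<omega>) xs)) \<in> measurable N (count_space UNIV)"
    by (simp add: pair_measure_countable)
  then have "(\<lambda>(a, b). a # b) \<circ> (\<lambda>\<omega>. (f x \<omega>, map (\<lambda>i. f i \<omega>) xs)) \<in> measurable N (count_space UNIV)"
    by (rule measurable_comp) simp
  then show ?case by (simp add: o_def)
qed

context
  fixes N :: "'a measure" and E :: "nat \<Rightarrow> nat \<Rightarrow> 'a \<Rightarrow> real"
  assumes borel_measurable_E: "\<And>i k. i \<ge> 1 \<Longrightarrow> (\<lambda>\<omega>. E i k \<omega>) \<in> borel_measurable N"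
begin

lemma borel_measurable_jump: "i \<ge> 1 \<Longrightarrow> (\<lambda>\<omega>. jump (\<lambda>i k. E i k \<omega>) i k) \<in> borel_measurable N"
  unfolding jump_def by (intro borel_measurable_sum borel_measurable_E)

lemma borel_measurable_branching_list_nth:
  assumes "length ts \<ge> 1" "p < length ts + m"
  shows "(\<lambda>\<omega>. branching_list ts (\<lambda>i k. E i k \<omega>) m ! p) \<in> borel_measurable N"
  using assms(2)
proof (induction m arbitrary: p)
  case (Suc m)
  let ?T = "\<lambda>\<omega>. branching_list ts (\<lambda>i k. E i k \<omega>) m"
  define L where "L = length ts + m"
  have len: "length (?T \<omega>) = L" for \<omega>
    unfolding L_def by (simp add: length_branching_list)
  show ?case
  proof (cases "p < L")
    case True
    then show ?thesis
      using Suc.IH len by (simp add: nth_append L_def)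
  next
    case False
    then have p: "p = L"
      using Suc.prems L_def by simp
    define J :: "(nat \<times> nat) set" where "J = {(i, k). 1 \<le> k \<and> 1 \<le> i \<and> i \<le> L}"
    define v where "v = (\<lambda>(j::nat \<times> nat) \<omega>. ?T \<omega> ! (fst j - 1) + jump (\<lambda>i k. E i k \<omega>) (fst j) (snd j))"
    define l where "l = (\<lambda>\<omega>. ?T \<omega> ! (L - 1))"
    have L: "L \<ge> 1"
      using assms(1) unfolding L_def by simp
    have eq: "branching_list ts (\<lambda>i k. E i k \<omega>) (Suc m) ! p = Inf {v j \<omega> | j. j \<in> J \<and> v j \<omega> > l \<omega>}" for \<omega>
    proof -
      have "last (?T \<omega>) = l \<omega>"
        unfolding l_def using len[of \<omega>] L by (subst last_conv_nth) auto
      then have "next_branching (\<lambda>i k. E i k \<omega>) (?T \<omega>) = Inf {v j \<omega> | j. j \<in> J \<and> v j \<omega> > l \<omega>}"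
        unfolding next_branching_def len
        by (intro arg_cong[where f=Inf] set_eqI) (auto simp: J_def v_def)
      then show ?thesis
        using p len[of \<omega>] by (simp add: nth_append)
    qed
    have v: "v j \<in> borel_measurable N" if "j \<in> J" for j
      using that unfolding v_def J_def
      by (cases j) (auto intro!: borel_measurable_add Suc.IH borel_measurable_jump simp: L_def)
    have "l \<in> borel_measurable N"
      unfolding l_def using L L_def by (intro Suc.IH) auto
    with v show ?thesis
      unfolding eq by (rule borel_measurable_Inf_above)
  qed
qed simp

lemma measurable_BI:
  assumes i: "i \<ge> 1" and t: "t \<in> borel_measurable N"
  shows "(\<lambda>\<omega>. BI (\<lambda>i k. E i k \<omega>) i (t \<omega>)) \<in> measurable N (count_space UNIV)"
proof -
  have "(\<lambda>\<omega>. card {k. 1 \<le> k \<and> jump (\<lambda>i k. E i k \<omega>) i k \<le> t \<omega>}) \<in> measurable N (count_space UNIV)"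
  proof (rule measurable_card_Collect)
    fix k
    have [measurable]: "(\<lambda>\<omega>. jump (\<lambda>i k. E i k \<omega>) i k) \<in> borel_measurable N" "t \<in> borel_measurable N"
      using borel_measurable_jump[OF i] t .
    show "Measurable.pred N (\<lambda>\<omega>. 1 \<le> k \<and> jump (\<lambda>i k. E i k \<omega>) i k \<le> t \<omega>)"
      by measurable
  qed
  then show ?thesis
    unfolding BI_def by measurable
qed

lemma borel_measurable_TA: "j \<ge> 1 \<Longrightarrow> (\<lambda>\<omega>. TA (\<lambda>i k. E i k \<omega>) j) \<in> borel_measurable N"
  unfolding TA_def TAlist_eq_branching_list by (intro borel_measurable_branching_list_nth) auto

lemma borel_measurable_TB: "(\<lambda>\<omega>. TB (\<lambda>i k. E i k \<omega>) j) \<in> borel_measurable N"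
  unfolding TB_def TBlist_eq_branching_list by (intro borel_measurable_branching_list_nth) auto

lemma measurable_DtildeA: "(\<lambda>\<omega>. DtildeA (\<lambda>i k. E i k \<omega>) n) \<in> measurable N (count_space UNIV)"
  unfolding DtildeA_def
  by (intro measurable_map_list measurable_BI borel_measurable_diff borel_measurable_TA) auto

lemma measurable_DtildeB: "(\<lambda>\<omega>. DtildeB (\<lambda>i k. E i k \<omega>) n) \<in> measurable N (count_space UNIV)"
  unfolding DtildeB_def
  by (intro measurable_map_list measurable_BI borel_measurable_diff borel_measurable_TB) auto

end

section \<open>The embedding theorem\<close>

locale BI_clocks = prob_space M
  for M :: "'a measure" and E :: "nat \<Rightarrow> nat \<Rightarrow> 'a \<Rightarrow> real" and \<delta> :: real +
  assumes \<delta>: "\<delta> > -1"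
    and indep: "indep_vars (\<lambda>_. borel) (\<lambda>(i, k). E i k) {(i, k). i \<ge> 1}"
    and exponential: "\<And>i k. i \<ge> 1 \<Longrightarrow> distributed M lborel (E i k) (exponential_density (BIrate \<delta> i k))"
begin

abbreviation clocks :: "'a \<Rightarrow> nat \<times> nat \<Rightarrow> real" where
  "clocks \<omega> \<equiv> clock_field (\<lambda>i k. E i k \<omega>)"

lemma borel_measurable_E: "i \<ge> 1 \<Longrightarrow> (\<lambda>\<omega>. E i k \<omega>) \<in> borel_measurable M"
  using distributed_measurable[OF exponential] by simp

lemma measurable_clocks: "clocks \<in> measurable M clock_borel"
  unfolding clock_field_def by (rule measurable_restrict) (auto simp: clock_index_def intro: borel_measurable_E)

lemma distr_E: "i \<ge> 1 \<Longrightarrow> distr M lborel (E i k) = exp_measure (BIrate \<delta> i k)"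
  unfolding exp_measure_def by (rule distributed_distr_eq_density[OF exponential])

lemma distr_clocks: "distr M clock_borel clocks = clock_space \<delta> (\<lambda>_. 0)"
proof -
  have "indep_vars (\<lambda>_. borel) (\<lambda>p. E (fst p) (snd p)) clock_index"
    using indep by (simp add: clock_index_def case_prod_beta' Collect_case_prod_Sigma)
  then have "distr M clock_borel clocks = (\<Pi>\<^sub>M p\<in>clock_index. distr M borel (E (fst p) (snd p)))"
    unfolding clock_field_def
    by (rule indep_vars_iff_distr_eq_PiM'[THEN iffD1, rotated 2])
       (auto simp: clock_index_def intro!: exI[of _ "(1, 0)"] borel_measurable_E)
  also have "\<dots> = clock_space \<delta> (\<lambda>_. 0)"
    unfolding clock_space_def
  proof (rule PiM_cong[OF refl])
    fix p assume "p \<in> clock_index"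
    then have "distr M lborel (E (fst p) (snd p)) = exp_measure (clock_rate \<delta> (\<lambda>_. 0) p)"
      by (simp add: distr_E clock_rate_def clock_index_def)
    then show "distr M borel (E (fst p) (snd p)) = exp_measure (clock_rate \<delta> (\<lambda>_. 0) p)"
      by (simp add: distr_cong[of M M borel lborel])
  qed
  finally show ?thesis .
qed

lemma AE_clocks_pos: "AE \<omega> in M. \<forall>i k. i \<ge> 1 \<longrightarrow> E i k \<omega> > 0"
proof -
  have "AE \<omega> in M. E i k \<omega> > 0" if i: "i \<ge> 1" for i k
  proof (rule AE_distrD[of "E i k" M lborel])
    show "E i k \<in> measurable M lborel"
      using borel_measurable_E[OF i] by simp
    have "AE x in lborel. x \<noteq> 0"
      by (rule AE_lborel_singleton)
    then have "AE x in lborel. 0 < ennreal (exponential_density (BIrate \<delta> i k) x) \<longrightarrow> x > 0"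
      by eventually_elim (auto simp: exponential_density_def)
    then show "AE x in distr M lborel (E i k). x > 0"
      unfolding distr_E[OF i] exp_measure_def by (subst AE_density) auto
  qed
  then show ?thesis
    by (simp add: AE_all_countable)
qed

lemma distr_race_clocks:
  assumes "a \<ge> 1"
  shows "distr M (count_space UNIV) (\<lambda>\<omega>. race a m (clocks \<omega>)) = measure_pmf (map_pmf Some (targets_pmf \<delta> a (\<lambda>_. 0) m))"
  using distr_distr[OF measurable_race measurable_clocks, of a m]
  by (simp add: o_def distr_clocks distr_race[OF \<delta> assms])

lemma AE_race_clocks_defined:
  assumes "a \<ge> 1"
  shows "AE \<omega> in M. race a m (clocks \<omega>) \<noteq> None"
proof -
  have race: "(\<lambda>\<omega>. race a m (clocks \<omega>)) \<in> measurable M (count_space UNIV)"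
    using measurable_comp[OF measurable_clocks measurable_race] by (simp add: o_def)
  have "pmf (map_pmf Some (targets_pmf \<delta> a (\<lambda>_. 0) m)) None = 0"
    by (simp add: pmf_eq_0_set_pmf)
  then have "emeasure M ((\<lambda>\<omega>. race a m (clocks \<omega>)) -` {None} \<inter> space M) = 0"
    using emeasure_distr[OF race, of "{None}"]
    by (simp add: distr_race_clocks[OF assms] emeasure_pmf_single)
  then show ?thesis
    using measurable_sets[OF race, of "{None}"] by (intro AE_I'[where N="_ -` {None} \<inter> space M"]) auto
qed

text \<open>The pathwise identity needs positive holding times, which hold only almost surely;
  off a null set the race may be undefined, whence the detour through \<open>the\<close>.\<close>

lemma distr_eq_degree_vector:
  assumes a: "a \<ge> 1" and D: "(\<lambda>\<omega>. D (\<lambda>i k. E i k \<omega>)) \<in> measurable M (count_space UNIV)"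
    and path: "\<And>E' ws. (\<And>i k. i \<ge> 1 \<Longrightarrow> E' i k > 0) \<Longrightarrow> race a m (clock_field E') = Some ws
      \<Longrightarrow> D E' = degree_vector n ws"
  shows "distr M (count_space UNIV) (\<lambda>\<omega>. D (\<lambda>i k. E i k \<omega>))
       = measure_pmf (map_pmf (degree_vector n) (targets_pmf \<delta> a (\<lambda>_. 0) m))"
proof -
  let ?race = "\<lambda>\<omega>. race a m (clocks \<omega>)"
  have race: "?race \<in> measurable M (count_space UNIV)"
    using measurable_comp[OF measurable_clocks measurable_race] by (simp add: o_def)
  have "AE \<omega> in M. D (\<lambda>i k. E i k \<omega>) = degree_vector n (the (?race \<omega>))"
    using AE_clocks_pos AE_race_clocks_defined[OF a, of m] by eventually_elim (auto intro: path)
  then have "distr M (count_space UNIV) (\<lambda>\<omega>. D (\<lambda>i k. E i k \<omega>))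
      = distr M (count_space UNIV) ((\<lambda>v. degree_vector n (the v)) \<circ> ?race)"
    by (intro distr_cong_AE) (use D race in \<open>auto simp: o_def\<close>)
  also have "\<dots> = distr (distr M (count_space UNIV) ?race) (count_space UNIV) (\<lambda>v. degree_vector n (the v))"
    by (rule distr_distr[symmetric, OF _ race]) simp
  also have "\<dots> = measure_pmf (map_pmf (\<lambda>v. degree_vector n (the v)) (map_pmf Some (targets_pmf \<delta> a (\<lambda>_. 0) m)))"
    by (simp only: distr_race_clocks[OF a] map_pmf_rep_eq)
  also have "\<dots> = measure_pmf (map_pmf (degree_vector n) (targets_pmf \<delta> a (\<lambda>_. 0) m))"
    by (simp add: pmf.map_comp o_def)
  finally show ?thesis .
qed

end

theorem mainTheorem1:
  fixes M :: "'a measure" and E :: "nat \<Rightarrow> nat \<Rightarrow> 'a \<Rightarrow> real"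
    and \<delta> :: real and n :: nat
  assumes "\<delta> > -1" and "n \<ge> 1"
    and "prob_space M"
    and "prob_space.indep_vars M (\<lambda>_. borel) (\<lambda>(i, k). E i k) {(i, k). i \<ge> 1}"
    and "\<And>i k. i \<ge> 1 \<Longrightarrow> distributed M lborel (E i k) (exponential_density (BIrate \<delta> i k))"
  shows "(distr M (count_space UNIV) (\<lambda>\<omega>. DtildeA (\<lambda>i k. E i k \<omega>) n)
           = measure_pmf (map_pmf (degseq n) (graphA \<delta> n))) \<and>
         (distr M (count_space UNIV) (\<lambda>\<omega>. DtildeB (\<lambda>i k. E i k \<omega>) n)
           = measure_pmf (map_pmf (degseq n) (graphB \<delta> n)))"
proof -
  interpret BI_clocks M E \<delta>
    using assms by (simp add: BI_clocks_def BI_clocks_axioms_def)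
  have "distr M (count_space UNIV) (\<lambda>\<omega>. DtildeA (\<lambda>i k. E i k \<omega>) n)
      = measure_pmf (map_pmf (degree_vector n) (targets_pmf \<delta> 1 (\<lambda>_. 0) (n - 1)))"
    by (rule distr_eq_degree_vector)
       (auto intro: measurable_DtildeA borel_measurable_E DtildeA_eq_degree_vector assms(2))
  moreover have "distr M (count_space UNIV) (\<lambda>\<omega>. DtildeB (\<lambda>i k. E i k \<omega>) n)
      = measure_pmf (map_pmf (degree_vector n) (targets_pmf \<delta> 2 (\<lambda>_. 0) (n - 1)))"
    by (rule distr_eq_degree_vector)
       (auto intro: measurable_DtildeB borel_measurable_E DtildeB_eq_degree_vector assms(2))
  ultimately show ?thesis
    unfolding degseq_graphA[OF assms(1,2)] degseq_graphB[OF assms(1,2)] ..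
qed

end
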